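(* Let $\{\ket{\Phi_b}\}_{b=1}^{2^{n+m}}$ be a stabilizer basis of $\mathcal{H}_n\otimes\mathcal{H}_m$, let $\ket\psi\in\mathcal{H}_m$ be an arbitrary unit vector, let $\mu_b=(I\otimes\bra\psi)\ket{\Phi_b}\!\bra{\Phi_b}(I\otimes\ket\psi)$, and let $p$ be the entanglement entropy of the states $\ket{\Phi_b}$ across $\mathcal{H}_n|\mathcal{H}_m$. Then $s_{\boldsymbol\mu}=k\,2^{n-p}$ for some $k\in\mathbb{N}$.
   Context: $\mathcal{H}_n=(\mathbb{C}^2)^{\otimes n}$ (data qubits), $\mathcal{H}_m=(\mathbb{C}^2)^{\otimes m}$ (ancilla qubits). A stabilizer basis of $k$ qubits is the orthonormal basis of common eigenvectors of $k$ independent pairwise commuting Pauli operators. The entanglement entropy is the von Neumann entropy (base 2) of the reduced state on $\mathcal{H}_n$; for a stabilizer basis it is an integer $p$, the same for all basis elements. $s_{\boldsymbol\mu}=\dim\operatorname{span}(\{\mu_b\})$ (complex linear span of operators on $\mathcal{H}_n$). *)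

theory Defs
  imports "HOL-Library.Function_Algebras" "Jordan_Normal_Form.Char_Poly"
begin

(* A state / vector on N qubits is a function nat => complex supported on {..<2^N};
   an operator on N qubits is a function nat => nat => complex (matrix entries),
   supported on {..<2^N} x {..<2^N}.
   H_n (x) H_m is identified with C^(2^(n+m)) via index a * 2^m + c,
   a < 2^n (data part), c < 2^m (ancilla part). *)

definition qbit :: "nat \<Rightarrow> nat \<Rightarrow> nat" where
  "qbit i k = i div 2 ^ k mod 2"

datatype pauli1 = PI | PX | PY | PZ

fun pauli1_entry :: "pauli1 \<Rightarrow> nat \<Rightarrow> nat \<Rightarrow> complex" where
  "pauli1_entry PI r s = (if r = s then 1 else 0)"
| "pauli1_entry PX r s = (if r \<noteq> s then 1 else 0)"
| "pauli1_entry PY r s = (if r = s then 0 else if r = 0 then - \<i> else \<i>)"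
| "pauli1_entry PZ r s = (if r = s then (if r = 0 then 1 else -1) else 0)"

definition pauli_op :: "nat \<Rightarrow> complex \<Rightarrow> (nat \<Rightarrow> pauli1) \<Rightarrow> nat \<Rightarrow> nat \<Rightarrow> complex" where
  "pauli_op N c ps = (\<lambda>i j. if i < 2 ^ N \<and> j < 2 ^ N
      then c * (\<Prod>k<N. pauli1_entry (ps k) (qbit i k) (qbit j k)) else 0)"

definition is_pauli :: "nat \<Rightarrow> (nat \<Rightarrow> nat \<Rightarrow> complex) \<Rightarrow> bool" where
  "is_pauli N P \<longleftrightarrow> (\<exists>c ps. c \<in> {1, -1, \<i>, -\<i>} \<and> P = pauli_op N c ps)"

definition ident :: "nat \<Rightarrow> nat \<Rightarrow> nat \<Rightarrow> complex" where
  "ident N = (\<lambda>i j. if i < 2 ^ N \<and> i = j then 1 else 0)"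

definition mmult :: "nat \<Rightarrow> (nat \<Rightarrow> nat \<Rightarrow> complex) \<Rightarrow> (nat \<Rightarrow> nat \<Rightarrow> complex) \<Rightarrow> nat \<Rightarrow> nat \<Rightarrow> complex" where
  "mmult N A B = (\<lambda>i j. \<Sum>k<2 ^ N. A i k * B k j)"

fun mprod_list :: "nat \<Rightarrow> (nat \<Rightarrow> nat \<Rightarrow> complex) list \<Rightarrow> nat \<Rightarrow> nat \<Rightarrow> complex" where
  "mprod_list N [] = ident N"
| "mprod_list N (A # As) = mmult N A (mprod_list N As)"

definition mvmult :: "nat \<Rightarrow> (nat \<Rightarrow> nat \<Rightarrow> complex) \<Rightarrow> (nat \<Rightarrow> complex) \<Rightarrow> nat \<Rightarrow> complex" where
  "mvmult N A v = (\<lambda>i. \<Sum>j<2 ^ N. A i j * v j)"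

definition cinner :: "nat \<Rightarrow> (nat \<Rightarrow> complex) \<Rightarrow> (nat \<Rightarrow> complex) \<Rightarrow> complex" where
  "cinner N u v = (\<Sum>i<2 ^ N. cnj (u i) * v i)"

definition is_vec :: "nat \<Rightarrow> (nat \<Rightarrow> complex) \<Rightarrow> bool" where
  "is_vec N v \<longleftrightarrow> (\<forall>i\<ge>2 ^ N. v i = 0)"

(* Paulis P_0..P_{k-1} on N qubits are independent: no nonempty sub-product is
   proportional to the identity (they generate a group of order 2^k modulo phases). *)
definition independent_paulis :: "nat \<Rightarrow> nat \<Rightarrow> (nat \<Rightarrow> nat \<Rightarrow> nat \<Rightarrow> complex) \<Rightarrow> bool" where
  "independent_paulis N k P \<longleftrightarrow>
     (\<forall>S. S \<subseteq> {..<k} \<and> S \<noteq> {} \<longrightarrow>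
        \<not> (\<exists>c. mprod_list N (map P (sorted_list_of_set S)) = (\<lambda>i j. c * ident N i j)))"

definition stabilizer_basis :: "nat \<Rightarrow> (nat \<Rightarrow> nat \<Rightarrow> complex) \<Rightarrow> bool" where
  "stabilizer_basis N Phi \<longleftrightarrow>
     (\<exists>P. (\<forall>l<N. is_pauli N (P l))
        \<and> (\<forall>l<N. \<forall>l'<N. mmult N (P l) (P l') = mmult N (P l') (P l))
        \<and> independent_paulis N N P
        \<and> (\<forall>b<2 ^ N. is_vec N (Phi b))
        \<and> (\<forall>b<2 ^ N. \<forall>b'<2 ^ N. cinner N (Phi b) (Phi b') = (if b = b' then 1 else 0))
        \<and> (\<forall>b<2 ^ N. \<forall>l<N. \<exists>lam. mvmult N (P l) (Phi b) = (\<lambda>i. lam * Phi b i)))"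

(* (I \<otimes> \<langle>psi|) |Phi\<rangle>, a vector of H_n *)
definition partial_bra :: "nat \<Rightarrow> nat \<Rightarrow> (nat \<Rightarrow> complex) \<Rightarrow> (nat \<Rightarrow> complex) \<Rightarrow> nat \<Rightarrow> complex" where
  "partial_bra n m psi Phi = (\<lambda>a. if a < 2 ^ n then (\<Sum>c<2 ^ m. cnj (psi c) * Phi (a * 2 ^ m + c)) else 0)"

definition outer :: "(nat \<Rightarrow> complex) \<Rightarrow> (nat \<Rightarrow> complex) \<Rightarrow> nat \<Rightarrow> nat \<Rightarrow> complex" where
  "outer u v = (\<lambda>i j. u i * cnj (v j))"

definition mu_op :: "nat \<Rightarrow> nat \<Rightarrow> (nat \<Rightarrow> complex) \<Rightarrow> (nat \<Rightarrow> complex) \<Rightarrow> nat \<Rightarrow> nat \<Rightarrow> complex" where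
  "mu_op n m psi Phi = outer (partial_bra n m psi Phi) (partial_bra n m psi Phi)"

definition reduced_state :: "nat \<Rightarrow> nat \<Rightarrow> (nat \<Rightarrow> complex) \<Rightarrow> complex mat" where
  "reduced_state n m Phi = mat (2 ^ n) (2 ^ n)
     (\<lambda>(a, a'). \<Sum>c<2 ^ m. Phi (a * 2 ^ m + c) * cnj (Phi (a' * 2 ^ m + c)))"

(* von Neumann entropy (base 2): - sum over eigenvalues (with algebraic multiplicity)
   lam log2 lam, with 0 log 0 = 0. *)
definition vn_entropy :: "complex mat \<Rightarrow> real" where
  "vn_entropy A = - (\<Sum>lam\<in>{lam. poly (char_poly A) lam = 0 \<and> lam \<noteq> 0}.
       real (order lam (char_poly A)) * Re lam * log 2 (Re lam))"

definition entanglement_entropy :: "nat \<Rightarrow> nat \<Rightarrow> (nat \<Rightarrow> complex) \<Rightarrow> real" where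
  "entanglement_entropy n m Phi = vn_entropy (reduced_state n m Phi)"

definition cscale :: "complex \<Rightarrow> (nat \<Rightarrow> nat \<Rightarrow> complex) \<Rightarrow> nat \<Rightarrow> nat \<Rightarrow> complex" where
  "cscale c A = (\<lambda>i j. c * A i j)"

definition span_dim :: "(nat \<Rightarrow> nat \<Rightarrow> complex) set \<Rightarrow> nat" where
  "span_dim S = vector_space.dim cscale S"

end

theory Submission
  imports Defs "Jordan_Normal_Form.Schur_Decomposition"
begin

text \<open>
  The basis vectors \<open>Phi b\<close> are the joint eigenvectors of the stabilizer group
  \<open>g T = (\<Prod>l\<in>T. P l)\<close>, \<open>T \<subseteq> {..<n + m}\<close>, and orthogonality of its characters gives
  \<open>|Phi b\<rangle>\<langle>Phi b| = 2\<^sup>-\<^sup>N \<Sum>\<^sub>T cnj (\<lambda>\<^sub>b T) g T\<close>.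
  Tracing out the ancilla keeps only the subgroup \<open>A\<close> of elements acting trivially on it, so the
  reduced state squares to \<open>|A| 2\<^sup>-\<^sup>n\<close> times itself and has entropy \<open>n - log\<^sub>2 |A|\<close>;
  hence \<open>|A| = 2\<^sup>n\<^sup>-\<^sup>p\<close>.
  Sandwiching with \<open>psi\<close> instead keeps the elements whose ancilla factor has nonzero expectation
  in \<open>psi\<close>. Their data factors are Hilbert-Schmidt orthogonal Pauli strings spanning the same space
  as the \<open>mu b\<close>, and multiplying by \<open>A\<close> permutes them, so their number is a multiple of \<open>|A|\<close>.
\<close>

lemma sum_lessThan_add:
  fixes g :: "nat \<Rightarrow> 'a :: comm_monoid_add"
  shows "(\<Sum>i<a + b. g i) = (\<Sum>i<a. g i) + (\<Sum>i<b. g (i + a))"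
proof -
  have "(\<Sum>i<a + b. g i) = (\<Sum>i<a. g i) + (\<Sum>i\<in>{0 + a..<b + a}. g i)"
    by (simp add: lessThan_atLeast0 sum.atLeastLessThan_concat add.commute)
  then show ?thesis by (simp only: sum.shift_bounds_nat_ivl lessThan_atLeast0)
qed

lemma prod_lessThan_add:
  fixes g :: "nat \<Rightarrow> 'a :: comm_monoid_mult"
  shows "(\<Prod>i<a + b. g i) = (\<Prod>i<a. g i) * (\<Prod>i<b. g (i + a))"
proof -
  have "(\<Prod>i<a + b. g i) = (\<Prod>i<a. g i) * (\<Prod>i\<in>{0 + a..<b + a}. g i)"
    by (simp add: lessThan_atLeast0 prod.atLeastLessThan_concat add.commute)
  then show ?thesis by (simp only: prod.shift_bounds_nat_ivl lessThan_atLeast0)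
qed

lemma qbit_less_2: "qbit i k < 2"
  by (simp add: qbit_def)

lemma qbit_tensor_index:
  assumes "c < 2 ^ m"
  shows "qbit (a * 2 ^ m + c) k = (if k < m then qbit c k else qbit a (k - m))"
proof (cases "k < m")
  case True
  then obtain d where d: "m = k + Suc d" using less_imp_Suc_add[OF True] by auto
  have e: "a * 2 ^ m + c = c + 2 ^ k * (2 * (2 ^ d * a))"
    by (simp add: d power_add mult_ac)
  have "(a * 2 ^ m + c) div 2 ^ k = c div 2 ^ k + 2 * (2 ^ d * a)"
    unfolding e by simp
  then show ?thesis using True by (simp add: qbit_def)
next
  case False
  then obtain d where d: "k = m + d" using le_Suc_ex[of m k] by auto
  have "(a * 2 ^ m + c) div 2 ^ k = (a * 2 ^ m + c) div 2 ^ m div 2 ^ d"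
    by (simp add: d power_add div_mult2_eq)
  also have "(a * 2 ^ m + c) div 2 ^ m = a" using assms by simp
  finally show ?thesis using False d by (simp add: qbit_def)
qed

lemma sum_prod_qbit:
  fixes f :: "nat \<Rightarrow> nat \<Rightarrow> 'a :: comm_semiring_1"
  shows "(\<Sum>j<2 ^ N. \<Prod>k<N. f k (qbit j k)) = (\<Prod>k<N. f k 0 + f k 1)"
proof (induction N)
  case 0
  then show ?case by simp
next
  case (Suc N)
  have low: "(\<Prod>k<Suc N. f k (qbit j k)) = (\<Prod>k<N. f k (qbit j k)) * f N 0" if "j < 2 ^ N" for j
    using qbit_tensor_index[of j N 0 N] that by (simp add: qbit_def)
  have high: "(\<Prod>k<Suc N. f k (qbit (j + 2 ^ N) k)) = (\<Prod>k<N. f k (qbit j k)) * f N 1"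
    if "j < 2 ^ N" for j
  proof -
    have q: "qbit (j + 2 ^ N) k = (if k < N then qbit j k else 1)" if "k \<le> N" for k
      using qbit_tensor_index[of j N 1 k] \<open>j < 2 ^ N\<close> that by (simp add: add.commute qbit_def)
    have "(\<Prod>k<N. f k (qbit (j + 2 ^ N) k)) = (\<Prod>k<N. f k (qbit j k))"
      by (rule prod.cong) (auto simp: q)
    then show ?thesis using q[of N] by simp
  qed
  have "(\<Sum>j<2 ^ Suc N. \<Prod>k<Suc N. f k (qbit j k))
      = (\<Sum>j<2 ^ N. \<Prod>k<Suc N. f k (qbit j k)) + (\<Sum>j<2 ^ N. \<Prod>k<Suc N. f k (qbit (j + 2 ^ N) k))"
    unfolding power_Suc mult_2 by (rule sum_lessThan_add)
  also have "\<dots> = (\<Sum>j<2 ^ N. \<Prod>k<N. f k (qbit j k)) * (f N 0 + f N 1)"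
    by (simp add: low high sum_distrib_right distrib_left del: prod.lessThan_Suc)
  finally show ?case using Suc by simp
qed

lemma eq_if_qbit_eq:
  assumes "i < 2 ^ N" "j < 2 ^ N" "\<forall>k<N. qbit i k = qbit j k"
  shows "i = j"
  using assms
proof (induction N arbitrary: i j)
  case (Suc N)
  have q: "qbit x (Suc k) = qbit (x div 2) k" for x k
    by (simp add: qbit_def div_mult2_eq)
  have "i div 2 = j div 2"
    using Suc.prems by (intro Suc.IH) (auto simp: q)
  moreover have "i mod 2 = j mod 2"
    using Suc.prems(3) by (auto simp: qbit_def)
  ultimately show ?case by (metis div_mult_mod_eq)
qed simp

lemma tensor_index_less:
  fixes a c :: nat
  assumes "a < 2 ^ n" "c < 2 ^ m"
  shows "a * 2 ^ m + c < 2 ^ (n + m)"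
proof -
  have "a * 2 ^ m + c < (a + 1) * 2 ^ m" using assms by simp
  also have "\<dots> \<le> 2 ^ n * 2 ^ m" using assms by (intro mult_right_mono) auto
  finally show ?thesis by (simp add: power_add)
qed

lemma sum_tensor_index:
  fixes f :: "nat \<Rightarrow> 'a :: comm_monoid_add"
  shows "(\<Sum>a<A. \<Sum>c<C. f (a * C + c)) = (\<Sum>i<A * C. f i)"
proof (induction A)
  case (Suc A)
  then show ?case
    using sum_lessThan_add[of f "A * C" C] by (simp add: add.commute)
qed simp

section \<open>Pauli operators\<close>

fun pauli1_mult :: "pauli1 \<Rightarrow> pauli1 \<Rightarrow> pauli1" where
  "pauli1_mult PI q = q"
| "pauli1_mult p PI = p"
| "pauli1_mult PX PX = PI" | "pauli1_mult PY PY = PI" | "pauli1_mult PZ PZ = PI"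
| "pauli1_mult PX PY = PZ" | "pauli1_mult PY PX = PZ"
| "pauli1_mult PY PZ = PX" | "pauli1_mult PZ PY = PX"
| "pauli1_mult PZ PX = PY" | "pauli1_mult PX PZ = PY"

fun pauli1_phase :: "pauli1 \<Rightarrow> pauli1 \<Rightarrow> complex" where
  "pauli1_phase PX PY = \<i>" | "pauli1_phase PY PX = - \<i>"
| "pauli1_phase PY PZ = \<i>" | "pauli1_phase PZ PY = - \<i>"
| "pauli1_phase PZ PX = \<i>" | "pauli1_phase PX PZ = - \<i>"
| "pauli1_phase _ _ = 1"

lemma pauli1_mult_PI_right [simp]: "pauli1_mult p PI = p"
  by (cases p) auto

lemma pauli1_mult_self [simp]: "pauli1_mult p p = PI"
  by (cases p) auto

lemma pauli1_mult_commute: "pauli1_mult p q = pauli1_mult q p"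
  by (cases p; cases q) auto

lemma pauli1_mult_assoc: "pauli1_mult (pauli1_mult p q) r = pauli1_mult p (pauli1_mult q r)"
  by (cases p; cases q; cases r) auto

lemma pauli1_phase_self [simp]: "pauli1_phase p p = 1"
  by (cases p) auto

lemma norm_pauli1_phase [simp]: "cmod (pauli1_phase p q) = 1"
  by (cases p; cases q) auto

lemma pauli1_entry_mult:
  assumes "r < 2" "s < 2"
  shows "pauli1_entry p r 0 * pauli1_entry q 0 s + pauli1_entry p r 1 * pauli1_entry q 1 s
       = pauli1_phase p q * pauli1_entry (pauli1_mult p q) r s"
proof -
  have "r = 0 \<or> r = 1" "s = 0 \<or> s = 1" using assms by auto
  then show ?thesis by (cases p; cases q) auto
qed

lemma pauli1_entry_trace: "pauli1_entry p 0 0 + pauli1_entry p 1 1 = (if p = PI then 2 else 0)"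
  by (cases p) auto

lemma pauli1_entry_hs_inner:
  "(cnj (pauli1_entry p 0 0) * pauli1_entry q 0 0 + cnj (pauli1_entry p 0 1) * pauli1_entry q 0 1)
   + (cnj (pauli1_entry p 1 0) * pauli1_entry q 1 0 + cnj (pauli1_entry p 1 1) * pauli1_entry q 1 1)
   = (if p = q then 2 else 0)"
  by (cases p; cases q) auto

lemma mmult_pauli_op:
  "mmult N (pauli_op N c ps) (pauli_op N d qs)
    = pauli_op N (c * d * (\<Prod>k<N. pauli1_phase (ps k) (qs k))) (\<lambda>k. pauli1_mult (ps k) (qs k))"
proof (intro ext)
  fix i j
  show "mmult N (pauli_op N c ps) (pauli_op N d qs) i j
    = pauli_op N (c * d * (\<Prod>k<N. pauli1_phase (ps k) (qs k))) (\<lambda>k. pauli1_mult (ps k) (qs k)) i j"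
  proof (cases "i < 2 ^ N \<and> j < 2 ^ N")
    case True
    have "mmult N (pauli_op N c ps) (pauli_op N d qs) i j
      = c * d * (\<Sum>l<2 ^ N. \<Prod>k<N. pauli1_entry (ps k) (qbit i k) (qbit l k)
                                     * pauli1_entry (qs k) (qbit l k) (qbit j k))"
      unfolding mmult_def pauli_op_def using True
      by (auto simp: prod.distrib sum_distrib_left intro!: sum.cong)
    also have "\<dots> = c * d * (\<Prod>k<N. pauli1_entry (ps k) (qbit i k) 0 * pauli1_entry (qs k) 0 (qbit j k)
         + pauli1_entry (ps k) (qbit i k) 1 * pauli1_entry (qs k) 1 (qbit j k))"
      by (subst sum_prod_qbit) simp
    also have "\<dots> = c * d * (\<Prod>k<N. pauli1_phase (ps k) (qs k)
                                 * pauli1_entry (pauli1_mult (ps k) (qs k)) (qbit i k) (qbit j k))"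
      by (simp add: pauli1_entry_mult[simplified] qbit_less_2)
    finally show ?thesis
      unfolding pauli_op_def using True by (simp add: prod.distrib)
  next
    case False
    then show ?thesis unfolding mmult_def pauli_op_def by auto
  qed
qed

lemma ident_eq_pauli_op: "ident N = pauli_op N 1 (\<lambda>_. PI)"
proof (intro ext)
  fix i j
  show "ident N i j = pauli_op N 1 (\<lambda>_. PI) i j"
  proof (cases "i < 2 ^ N \<and> j < 2 ^ N \<and> i \<noteq> j")
    case True
    then obtain k where "k < N" "qbit i k \<noteq> qbit j k" using eq_if_qbit_eq[of i N j] by auto
    then have "(\<Prod>k<N. pauli1_entry PI (qbit i k) (qbit j k)) = 0"
      by (intro prod_zero) auto
    then show ?thesis using True unfolding ident_def pauli_op_def by auto
  qed (auto simp: ident_def pauli_op_def)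
qed

lemma pauli_op_cong: "(\<And>k. k < N \<Longrightarrow> ps k = qs k) \<Longrightarrow> pauli_op N c ps = pauli_op N c qs"
  unfolding pauli_op_def by (intro ext) (auto intro!: prod.cong)

lemma scale_pauli_op: "(\<lambda>i j. a * pauli_op N c ps i j) = pauli_op N (a * c) ps"
  unfolding pauli_op_def by (intro ext) auto

lemma pauli_op_scale_entry: "pauli_op N c ps i j = c * pauli_op N 1 ps i j"
  unfolding pauli_op_def by simp

lemma trace_pauli_op:
  "(\<Sum>i<2 ^ N. pauli_op N c ps i i) = c * (\<Prod>k<N. if ps k = PI then 2 else 0)"
proof -
  have "(\<Sum>i<2 ^ N. pauli_op N c ps i i)
      = c * (\<Sum>i<2 ^ N. \<Prod>k<N. pauli1_entry (ps k) (qbit i k) (qbit i k))"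
    unfolding pauli_op_def by (simp add: sum_distrib_left)
  then show ?thesis
    by (simp add: sum_prod_qbit[where f = "\<lambda>k t. pauli1_entry (ps k) t t"]
                  pauli1_entry_trace[simplified])
qed

lemma hs_inner_pauli_op:
  "(\<Sum>i<2 ^ N. \<Sum>j<2 ^ N. cnj (pauli_op N c ps i j) * pauli_op N d qs i j)
     = cnj c * d * (\<Prod>k<N. if ps k = qs k then 2 else 0)"
proof -
  let ?e = "\<lambda>k s t. cnj (pauli1_entry (ps k) s t) * pauli1_entry (qs k) s t"
  have "(\<Sum>i<2 ^ N. \<Sum>j<2 ^ N. cnj (pauli_op N c ps i j) * pauli_op N d qs i j)
     = cnj c * d * (\<Sum>i<2 ^ N. \<Sum>j<2 ^ N. \<Prod>k<N. ?e k (qbit i k) (qbit j k))"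
    unfolding pauli_op_def by (simp add: sum_distrib_left prod.distrib mult_ac)
  also have "\<dots> = cnj c * d * (\<Sum>i<2 ^ N. \<Prod>k<N. ?e k (qbit i k) 0 + ?e k (qbit i k) 1)"
    by (subst sum_prod_qbit) (rule refl)
  also have "\<dots> = cnj c * d * (\<Prod>k<N. (?e k 0 0 + ?e k 0 1) + (?e k 1 0 + ?e k 1 1))"
    by (subst sum_prod_qbit[where f = "\<lambda>k s. ?e k s 0 + ?e k s 1"]) (rule refl)
  finally show ?thesis
    by (simp only: pauli1_entry_hs_inner)
qed

lemma pauli_op_eqD:
  assumes eq: "pauli_op N c ps = pauli_op N d qs" and "c \<noteq> 0"
  shows "\<forall>k<N. ps k = qs k" and "c = d"
proof -
  have hs: "cnj c * c * 2 ^ N = cnj c * d * (\<Prod>k<N. if ps k = qs k then 2 else 0)"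
    using hs_inner_pauli_op[of N c ps c ps] hs_inner_pauli_op[of N c ps d qs] eq by simp
  have "cnj c * c * 2 ^ N \<noteq> 0" using \<open>c \<noteq> 0\<close> by simp
  then have "(\<Prod>k<N. if ps k = qs k then 2 else 0) \<noteq> (0::complex)"
    using hs by auto
  then show all: "\<forall>k<N. ps k = qs k"
    by (auto split: if_splits)
  then have "(\<Prod>k<N. if ps k = qs k then 2 else 0) = (2::complex) ^ N" by simp
  then show "c = d" using hs \<open>c \<noteq> 0\<close> by simp
qed

lemma pauli_op_tensor_entry:
  assumes "a < 2 ^ n" "a' < 2 ^ n" "c1 < 2 ^ m" "c2 < 2 ^ m"
  shows "pauli_op (n + m) c ps (a * 2 ^ m + c1) (a' * 2 ^ m + c2)
       = c * pauli_op m 1 ps c1 c2 * pauli_op n 1 (\<lambda>k. ps (k + m)) a a'"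
proof -
  let ?e = "\<lambda>k. pauli1_entry (ps k) (qbit (a * 2 ^ m + c1) k) (qbit (a' * 2 ^ m + c2) k)"
  have "(\<Prod>k<n + m. ?e k) = (\<Prod>k<m. ?e k) * (\<Prod>k<n. ?e (k + m))"
    by (subst add.commute) (rule prod_lessThan_add)
  also have "\<dots> = (\<Prod>k<m. pauli1_entry (ps k) (qbit c1 k) (qbit c2 k))
                  * (\<Prod>k<n. pauli1_entry (ps (k + m)) (qbit a k) (qbit a' k))"
    using assms by (simp add: qbit_tensor_index)
  finally show ?thesis
    using assms tensor_index_less unfolding pauli_op_def by simp
qed

lemma mvmult_mmult: "mvmult N (mmult N A B) v = mvmult N A (mvmult N B v)"
proof (intro ext)
  fix i
  have "mvmult N (mmult N A B) v i = (\<Sum>j<2 ^ N. \<Sum>k<2 ^ N. A i k * B k j * v j)"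
    unfolding mvmult_def mmult_def by (simp add: sum_distrib_right)
  also have "\<dots> = (\<Sum>k<2 ^ N. \<Sum>j<2 ^ N. A i k * B k j * v j)"
    by (rule sum.swap)
  finally show "mvmult N (mmult N A B) v i = mvmult N A (mvmult N B v) i"
    unfolding mvmult_def by (simp add: sum_distrib_left mult.assoc)
qed

lemma mvmult_ident:
  assumes "is_vec N v"
  shows "mvmult N (ident N) v = v"
proof (intro ext)
  fix i
  show "mvmult N (ident N) v i = v i"
  proof (cases "i < 2 ^ N")
    case True
    have "mvmult N (ident N) v i = (\<Sum>j<2 ^ N. if j = i then v j else 0)"
      unfolding mvmult_def ident_def using True by (intro sum.cong) auto
    then show ?thesis using True by simp
  qed (use assms in \<open>auto simp: mvmult_def ident_def is_vec_def\<close>)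
qed

lemma mvmult_scale: "mvmult N A (\<lambda>i. c * v i) = (\<lambda>i. c * mvmult N A v i)"
  unfolding mvmult_def by (simp add: sum_distrib_left mult_ac)

section \<open>Entropy of a scaled projector\<close>

lemma trace_mult_commute:
  fixes X Y :: "'a :: comm_semiring_1 mat"
  assumes "X \<in> carrier_mat d e" "Y \<in> carrier_mat e d"
  shows "(\<Sum>i<d. (X * Y) $$ (i, i)) = (\<Sum>k<e. (Y * X) $$ (k, k))"
proof -
  have "(\<Sum>i<d. (X * Y) $$ (i, i)) = (\<Sum>i<d. \<Sum>k<e. X $$ (i, k) * Y $$ (k, i))"
    using assms by (intro sum.cong refl) (auto simp: scalar_prod_def atLeast0LessThan)
  also have "\<dots> = (\<Sum>k<e. \<Sum>i<d. Y $$ (k, i) * X $$ (i, k))"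
    by (subst sum.swap) (simp add: mult.commute)
  also have "\<dots> = (\<Sum>k<e. (Y * X) $$ (k, k))"
    using assms by (intro sum.cong refl) (auto simp: scalar_prod_def atLeast0LessThan)
  finally show ?thesis .
qed

lemma similar_mat_scaled_idempotent:
  fixes A B :: "'a :: comm_ring_1 mat"
  assumes "similar_mat A B" "A \<in> carrier_mat d d" "A * A = c \<cdot>\<^sub>m A"
  shows "B * B = c \<cdot>\<^sub>m B" and "(\<Sum>i<d. B $$ (i, i)) = (\<Sum>i<d. A $$ (i, i))"
proof -
  obtain d' P Q where PQ: "{B, A, P, Q} \<subseteq> carrier_mat d' d'" "P * Q = 1\<^sub>m d'" "Q * P = 1\<^sub>m d'"
      "B = P * A * Q"
    using similar_matD[OF similar_mat_sym[OF assms(1)]] by blast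
  then have P: "P \<in> carrier_mat d d" and Q: "Q \<in> carrier_mat d d" and QP: "Q * P = 1\<^sub>m d"
    using assms(2) by auto
  have "B * B = P * (A * (Q * P)) * A * Q"
    unfolding PQ(4) using P Q assms(2) by (simp add: assoc_mult_mat[of _ d d _ d _ d])
  also have "\<dots> = c \<cdot>\<^sub>m (P * A * Q)"
    unfolding QP using P Q assms(2,3)
    by (simp add: assoc_mult_mat[of _ d d _ d _ d] mult_smult_distrib mult_smult_assoc_mat[of _ d d _ d])
  finally show "B * B = c \<cdot>\<^sub>m B" unfolding PQ(4) .
  have "(\<Sum>i<d. (P * (A * Q)) $$ (i, i)) = (\<Sum>i<d. ((A * Q) * P) $$ (i, i))"
    using P Q assms(2) by (intro trace_mult_commute) auto
  also have "(A * Q) * P = A"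
    using P Q assms(2) QP by (simp add: assoc_mult_mat[of _ d d _ d _ d])
  finally show "(\<Sum>i<d. B $$ (i, i)) = (\<Sum>i<d. A $$ (i, i))"
    unfolding PQ(4) using P Q assms(2) by (simp add: assoc_mult_mat[of _ d d _ d _ d])
qed

lemma upper_triangular_square_diag:
  assumes B: "B \<in> carrier_mat d d" "upper_triangular B" and i: "i < d"
  shows "(B * B) $$ (i, i) = B $$ (i, i) * B $$ (i, i)"
proof -
  have off_diag: "B $$ (i, k) * B $$ (k, i) = (if k = i then B $$ (i, i) * B $$ (i, i) else 0)"
    if "k < d" for k
  proof (cases k i rule: linorder_cases)
    case less
    then show ?thesis using B i by (simp add: upper_triangularD)
  next
    case greater
    then show ?thesis using B that by (simp add: upper_triangularD)
  qed simp
  have "(\<Sum>k\<in>{0..<d}. B $$ (i, k) * B $$ (k, i))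
      = (\<Sum>k\<in>{0..<d}. if k = i then B $$ (i, i) * B $$ (i, i) else 0)"
    by (intro sum.cong refl off_diag) simp
  then show ?thesis using B i by (simp add: scalar_prod_def)
qed

lemma prod_linear_factors_two_values:
  fixes c :: "'a :: field"
  assumes "set L \<subseteq> {0, c}" "c \<noteq> 0"
  shows "(\<Prod>t\<leftarrow>L. [:- t, 1:])
           = [:- c, 1:] ^ length (filter (\<lambda>t. t = c) L) * [:0, 1:] ^ length (filter (\<lambda>t. t \<noteq> c) L)"
    and "sum_list L = of_nat (length (filter (\<lambda>t. t = c) L)) * c"
  using assms(1)
  by (induction L) (auto simp: assms(2) algebra_simps)

lemma char_poly_scaled_idempotent:
  fixes A :: "complex mat"
  assumes A: "A \<in> carrier_mat d d" and sq: "A * A = c \<cdot>\<^sub>m A"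
    and tr: "(\<Sum>i<d. A $$ (i, i)) = 1" and "c \<noteq> 0"
  obtains r where "char_poly A = [:- c, 1:] ^ r * [:0, 1:] ^ (d - r)" "of_nat r * c = 1"
proof -
  obtain es where "char_poly A = (\<Prod>a\<leftarrow>es. [:- a, 1:])"
    using char_poly_factorized[OF A] by blast
  then obtain B where B: "B \<in> carrier_mat d d" "upper_triangular B" "similar_mat A B"
    using schur_decomposition_exists[OF A] by blast
  let ?L = "diag_mat B"
  have diag: "B $$ (i, i) \<in> {0, c}" if "i < d" for i
  proof -
    have "(B * B) $$ (i, i) = c * B $$ (i, i)"
      using similar_mat_scaled_idempotent(1)[OF B(3) A sq] B(1) that by simp
    then have "B $$ (i, i) * (B $$ (i, i) - c) = 0"
      using upper_triangular_square_diag[OF B(1,2) that] by (simp add: algebra_simps)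
    then show ?thesis by auto
  qed
  have L: "set ?L \<subseteq> {0, c}" "length ?L = d"
  proof
    show "t \<in> {0, c}" if "t \<in> set ?L" for t
    proof -
      obtain i where "i < d" "t = B $$ (i, i)" using \<open>t \<in> set ?L\<close> B(1) by (auto simp: diag_mat_def)
      then show ?thesis using diag by blast
    qed
  qed (use B(1) in \<open>simp add: diag_mat_def\<close>)
  have "sum_list ?L = 1"
    using similar_mat_scaled_idempotent(2)[OF B(3) A sq] tr B(1)
    by (simp add: diag_mat_def sum_list_distinct_conv_sum_set atLeast0LessThan)
  moreover have "char_poly A = (\<Prod>t\<leftarrow>?L. [:- t, 1:])"
    using char_poly_similar[OF B(3)] char_poly_upper_triangular[OF B(1,2)] by simp
  moreover have "length (filter (\<lambda>t. t \<noteq> c) ?L) = d - length (filter (\<lambda>t. t = c) ?L)"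
    using sum_length_filter_compl[of "\<lambda>t. t = c" ?L] L(2) by simp
  ultimately show ?thesis
    using that prod_linear_factors_two_values[OF L(1) \<open>c \<noteq> 0\<close>] by simp
qed

lemma vn_entropy_scaled_idempotent:
  fixes A :: "complex mat"
  assumes A: "A \<in> carrier_mat d d" and sq: "A * A = complex_of_real x \<cdot>\<^sub>m A"
    and tr: "(\<Sum>i<d. A $$ (i, i)) = 1" and x: "x > 0"
  shows "vn_entropy A = - log 2 x"
proof -
  let ?c = "complex_of_real x"
  obtain r where r: "char_poly A = [:- ?c, 1:] ^ r * [:0, 1:] ^ (d - r)" "of_nat r * ?c = 1"
    using char_poly_scaled_idempotent[OF A sq tr] x by auto
  have rx: "real r * x = 1" using r(2) by (metis of_real_eq_1_iff of_real_mult of_real_of_nat_eq)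
  then have "r \<noteq> 0" by (intro notI) simp
  have poly: "poly (char_poly A) z = (z - ?c) ^ r * z ^ (d - r)" for z
    unfolding r(1) by simp
  then have roots: "{z. poly (char_poly A) z = 0 \<and> z \<noteq> 0} = {?c}"
    using \<open>r \<noteq> 0\<close> x by auto
  have "Polynomial.order ?c ([:0, 1:] ^ (d - r)) = 0"
    using x by (intro order_0I) simp
  then have "Polynomial.order ?c (char_poly A) = r"
    unfolding r(1) using order_mult[of "[:- ?c, 1:] ^ r" "[:0, 1:] ^ (d - r)"] order_power_n_n by simp
  then show ?thesis
    unfolding vn_entropy_def roots using rx by simp
qed

section \<open>Cosets in a Boolean group\<close>

lemma card_dvd_card_if_boolean_group_closed:
  fixes f :: "'a \<Rightarrow> 'a \<Rightarrow> 'a"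
  assumes assoc: "\<And>x y z. f (f x y) z = f x (f y z)" and comm: "\<And>x y. f x y = f y x"
    and self_inverse: "\<And>x. f x x = e" and unit: "\<And>x. f x e = x"
    and H: "finite H" "e \<in> H" "\<And>h h'. h \<in> H \<Longrightarrow> h' \<in> H \<Longrightarrow> f h h' \<in> H"
    and D: "finite D" "\<And>x h. x \<in> D \<Longrightarrow> h \<in> H \<Longrightarrow> f x h \<in> D"
  shows "card H dvd card D"
proof -
  have cancel: "f x (f x h) = h" for x h
    by (metis assoc comm self_inverse unit)
  have orbit_eq: "f x ` H = f y ` H" if y: "y \<in> f x ` H" for x y
  proof -
    obtain h where h: "h \<in> H" "y = f x h" using y by blast
    have "f y h' = f x (f h h')" "f x h' = f y (f h h')" for h'
      unfolding h(2) assoc cancel by simp_all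
    then show ?thesis using H(3) h(1) by blast
  qed
  have "card H * card ((\<lambda>x. f x ` H) ` D) = card (\<Union>x\<in>D. f x ` H)"
  proof (rule card_partition)
    show "card Orb = card H" if Orb: "Orb \<in> (\<lambda>x. f x ` H) ` D" for Orb
    proof -
      obtain x where "Orb = f x ` H" using Orb by blast
      moreover have "inj_on (f x) H" by (rule inj_on_inverseI[of _ _ "f x"]) (rule cancel)
      ultimately show ?thesis by (simp add: card_image)
    qed
    show "Orb1 \<inter> Orb2 = {}"
      if "Orb1 \<in> (\<lambda>x. f x ` H) ` D" "Orb2 \<in> (\<lambda>x. f x ` H) ` D" "Orb1 \<noteq> Orb2" for Orb1 Orb2
      using that orbit_eq by blast
  qed (use D H in auto)
  also have "(\<Union>x\<in>D. f x ` H) = D"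
  proof
    show "(\<Union>x\<in>D. f x ` H) \<subseteq> D" using D(2) by blast
    show "D \<subseteq> (\<Union>x\<in>D. f x ` H)"
    proof
      fix x assume "x \<in> D"
      moreover have "x \<in> f x ` H" by (rule image_eqI[of _ _ e]) (simp_all add: unit H(2))
      ultimately show "x \<in> (\<Union>x\<in>D. f x ` H)" by blast
    qed
  qed
  finally show ?thesis by (intro dvdI) (rule sym)
qed

lemma sum_fun_apply: "(sum f A) x = (\<Sum>a\<in>A. f a x)"
  by (induction A rule: infinite_finite_induct) auto

interpretation cspace: vector_space cscale
  by unfold_locales (auto simp: cscale_def algebra_simps fun_eq_iff)

lemma sum_cscale_apply: "(\<Sum>x\<in>A. cscale (u x) (X x)) i j = (\<Sum>x\<in>A. u x * X x i j)"
  by (simp add: sum_fun_apply cscale_def)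

lemma inj_on_pauli_op_padded: "inj_on (pauli_op n 1) {d. \<forall>k\<ge>n. d k = PI}"
proof (rule inj_onI)
  fix d d' assume "d \<in> {d. \<forall>k\<ge>n. d k = PI}" "d' \<in> {d. \<forall>k\<ge>n. d k = PI}"
    and eq: "pauli_op n 1 d = pauli_op n 1 d'"
  then have "d k = d' k" if "\<not> k < n" for k using that by simp
  moreover have "d k = d' k" if "k < n" for k using pauli_op_eqD(1)[OF eq] that by simp
  ultimately show "d = d'" by blast
qed

lemma hs_inner_pauli_op_padded:
  assumes "\<forall>k\<ge>n. d k = PI" "\<forall>k\<ge>n. d' k = PI"
  shows "(\<Sum>i<2 ^ n. \<Sum>j<2 ^ n. cnj (pauli_op n 1 d i j) * pauli_op n 1 d' i j)
       = (if d = d' then 2 ^ n else 0)"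
proof (cases "d = d'")
  case True
  then show ?thesis using hs_inner_pauli_op[of n 1 d 1 d'] by simp
next
  case False
  then obtain k where k: "d k \<noteq> d' k" by auto
  then have "k < n" using assms by (cases "k < n") auto
  then have "(\<Prod>k<n. if d k = d' k then 2 else 0) = (0::complex)"
    using k by (intro prod_zero) auto
  then show ?thesis using hs_inner_pauli_op[of n 1 d 1 d'] False by simp
qed

lemma independent_pauli_ops_padded:
  assumes "D \<subseteq> {d. \<forall>k\<ge>n. d k = PI}"
  shows "cspace.independent (pauli_op n 1 ` D)"
proof
  assume "cspace.dependent (pauli_op n 1 ` D)"
  then obtain t u where t: "finite t" "t \<subseteq> pauli_op n 1 ` D" and "(\<Sum>v\<in>t. cscale (u v) v) = 0"
    and "\<exists>v\<in>t. u v \<noteq> 0"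
    unfolding cspace.dependent_explicit by blast
  then obtain d0 where d0: "pauli_op n 1 d0 \<in> t" "u (pauli_op n 1 d0) \<noteq> 0" "d0 \<in> D" by blast
  have hs: "(\<Sum>i<2 ^ n. \<Sum>j<2 ^ n. cnj (pauli_op n 1 d0 i j) * v i j)
      = (if v = pauli_op n 1 d0 then 2 ^ n else 0)" if v: "v \<in> t" for v
  proof -
    obtain d where d: "d \<in> D" "v = pauli_op n 1 d" using v t(2) by blast
    have padded: "d \<in> {d. \<forall>k\<ge>n. d k = PI}" "d0 \<in> {d. \<forall>k\<ge>n. d k = PI}"
      using assms d(1) d0(3) by blast+
    then have "v = pauli_op n 1 d0 \<longleftrightarrow> d0 = d"
      unfolding d(2) using inj_on_eq_iff[OF inj_on_pauli_op_padded] by blast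
    then show ?thesis
      using hs_inner_pauli_op_padded[of n d0 d] padded d(2) by simp
  qed
  have "0 = (\<Sum>i<2 ^ n. \<Sum>j<2 ^ n. cnj (pauli_op n 1 d0 i j) * (\<Sum>v\<in>t. cscale (u v) v) i j)"
    using \<open>(\<Sum>v\<in>t. cscale (u v) v) = 0\<close> by simp
  also have "\<dots> = (\<Sum>v\<in>t. u v * (\<Sum>i<2 ^ n. \<Sum>j<2 ^ n. cnj (pauli_op n 1 d0 i j) * v i j))"
    unfolding sum_cscale_apply by (simp add: sum_distrib_left sum.swap[of _ t] mult_ac)
  also have "\<dots> = (\<Sum>v\<in>t. if v = pauli_op n 1 d0 then u v * 2 ^ n else 0)"
    using hs by (intro sum.cong) auto
  also have "\<dots> = u (pauli_op n 1 d0) * 2 ^ n"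
    using t(1) d0(1) by simp
  finally show False using d0(2) by simp
qed


section \<open>The stabilizer group of a stabilizer basis\<close>

definition symdiff :: "'a set \<Rightarrow> 'a set \<Rightarrow> 'a set" where
  "symdiff T T' = (T - T') \<union> (T' - T)"

lemma symdiff_symdiff_cancel: "symdiff T (symdiff T T') = T'"
  unfolding symdiff_def by auto

lemma symdiff_subset: "T \<subseteq> A \<Longrightarrow> T' \<subseteq> A \<Longrightarrow> symdiff T T' \<subseteq> A"
  unfolding symdiff_def by auto

text \<open>Commutation of the generators is not assumed: it follows from the common eigenbasis.\<close>
locale stabilizer_frame =
  fixes N :: nat and Phi :: "nat \<Rightarrow> nat \<Rightarrow> complex" and P :: "nat \<Rightarrow> nat \<Rightarrow> nat \<Rightarrow> complex"
  assumes generators_pauli: "\<forall>l<N. is_pauli N (P l)"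
    and generators_independent: "independent_paulis N N P"
    and basis_vec: "\<forall>b<2 ^ N. is_vec N (Phi b)"
    and basis_orthonormal:
      "\<forall>b<2 ^ N. \<forall>b'<2 ^ N. cinner N (Phi b) (Phi b') = (if b = b' then 1 else 0)"
    and basis_eigen: "\<forall>b<2 ^ N. \<forall>l<N. \<exists>lam. mvmult N (P l) (Phi b) = (\<lambda>i. lam * Phi b i)"
begin

lemma basis_inner:
  "b < 2 ^ N \<Longrightarrow> b' < 2 ^ N \<Longrightarrow> (\<Sum>i<2 ^ N. cnj (Phi b i) * Phi b' i) = (if b = b' then 1 else 0)"
  using basis_orthonormal unfolding cinner_def by auto

lemma basis_norm: "b < 2 ^ N \<Longrightarrow> (\<Sum>i<2 ^ N. Phi b i * cnj (Phi b i)) = 1"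
  using basis_inner[of b b] by (simp add: mult.commute)

lemma basis_complete:
  assumes "i < 2 ^ N" "j < 2 ^ N"
  shows "(\<Sum>b<2 ^ N. Phi b i * cnj (Phi b j)) = (if i = j then 1 else 0)"
proof -
  define U where "U = mat (2 ^ N) (2 ^ N) (\<lambda>(i, b). Phi b i)"
  define V where "V = mat (2 ^ N) (2 ^ N) (\<lambda>(b, i). cnj (Phi b i))"
  have U: "U \<in> carrier_mat (2 ^ N) (2 ^ N)" and V: "V \<in> carrier_mat (2 ^ N) (2 ^ N)"
    unfolding U_def V_def by auto
  have "V * U = 1\<^sub>m (2 ^ N)"
    using U V basis_inner
    by (intro eq_matI) (auto simp: V_def U_def scalar_prod_def atLeast0LessThan)
  then have "U * V = 1\<^sub>m (2 ^ N)" by (rule mat_mult_left_right_inverse[OF V U])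
  moreover have "(U * V) $$ (i, j) = (\<Sum>b = 0..<2 ^ N. Phi b i * cnj (Phi b j))"
    using assms U V by (simp add: V_def U_def scalar_prod_def)
  ultimately show ?thesis using assms by (simp add: atLeast0LessThan)
qed

lemma basis_scale_cancel:
  assumes "b < 2 ^ N" "(\<lambda>i. x * Phi b i) = (\<lambda>i. y * Phi b i)"
  shows "x = y"
proof -
  have "\<exists>i. Phi b i \<noteq> 0"
  proof (rule ccontr)
    assume "\<nexists>i. Phi b i \<noteq> 0"
    then show False using basis_inner[OF assms(1) assms(1)] by simp
  qed
  then obtain i where "Phi b i \<noteq> 0" by blast
  then show ?thesis using fun_cong[OF assms(2), of i] by simp
qed

definition eigval :: "nat \<Rightarrow> nat \<Rightarrow> complex" where
  "eigval b l = (SOME x. mvmult N (P l) (Phi b) = (\<lambda>i. x * Phi b i))"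

lemma eigval_eigen:
  assumes "b < 2 ^ N" "l < N"
  shows "mvmult N (P l) (Phi b) = (\<lambda>i. eigval b l * Phi b i)"
proof -
  have "\<exists>x. mvmult N (P l) (Phi b) = (\<lambda>i. x * Phi b i)" using basis_eigen assms by blast
  then show ?thesis unfolding eigval_def by (rule someI_ex)
qed

definition gen_phase :: "nat \<Rightarrow> complex" where
  "gen_phase l = (SOME c. \<exists>ps. c \<in> {1, -1, \<i>, -\<i>} \<and> P l = pauli_op N c ps)"

definition gen_string :: "nat \<Rightarrow> nat \<Rightarrow> pauli1" where
  "gen_string l = (SOME ps. P l = pauli_op N (gen_phase l) ps)"

lemma generator_eq_pauli_op:
  assumes "l < N"
  shows "P l = pauli_op N (gen_phase l) (gen_string l)" and "gen_phase l \<in> {1, -1, \<i>, -\<i>}"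
proof -
  have "\<exists>c ps. c \<in> {1, -1, \<i>, -\<i>} \<and> P l = pauli_op N c ps"
    using generators_pauli assms unfolding is_pauli_def by auto
  then have "\<exists>ps. gen_phase l \<in> {1, -1, \<i>, -\<i>} \<and> P l = pauli_op N (gen_phase l) ps"
    unfolding gen_phase_def by (rule someI_ex)
  then obtain ps where phase: "gen_phase l \<in> {1, -1, \<i>, -\<i>}"
    and eq: "P l = pauli_op N (gen_phase l) ps"
    by blast
  from eq show "P l = pauli_op N (gen_phase l) (gen_string l)"
    unfolding gen_string_def by (rule someI[of "\<lambda>ps. P l = pauli_op N (gen_phase l) ps"])
  from phase show "gen_phase l \<in> {1, -1, \<i>, -\<i>}" .
qed

lemma norm_gen_phase: "l < N \<Longrightarrow> cmod (gen_phase l) = 1"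
  using generator_eq_pauli_op(2)[of l] by auto

lemma generator_square: "l < N \<Longrightarrow> mmult N (P l) (P l) = (\<lambda>i j. (gen_phase l)\<^sup>2 * ident N i j)"
  by (simp add: generator_eq_pauli_op(1) mmult_pauli_op power2_eq_square ident_eq_pauli_op
      scale_pauli_op)

lemma eigval_square:
  assumes b: "b < 2 ^ N" and l: "l < N"
  shows "(eigval b l)\<^sup>2 = (gen_phase l)\<^sup>2"
proof (rule basis_scale_cancel[OF b])
  have "mvmult N (mmult N (P l) (P l)) (Phi b) = (\<lambda>i. (eigval b l)\<^sup>2 * Phi b i)"
    by (simp add: mvmult_mmult eigval_eigen[OF b l] mvmult_scale power2_eq_square mult.assoc)
  moreover have "mvmult N (mmult N (P l) (P l)) (Phi b)
      = (\<lambda>i. (gen_phase l)\<^sup>2 * mvmult N (ident N) (Phi b) i)"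
    by (simp add: generator_square[OF l] mvmult_def sum_distrib_left mult.assoc)
  then have "mvmult N (mmult N (P l) (P l)) (Phi b) = (\<lambda>i. (gen_phase l)\<^sup>2 * Phi b i)"
    using mvmult_ident basis_vec b by simp
  ultimately show "(\<lambda>i. (eigval b l)\<^sup>2 * Phi b i) = (\<lambda>i. (gen_phase l)\<^sup>2 * Phi b i)"
    by simp
qed

lemma norm_eigval:
  assumes "b < 2 ^ N" "l < N"
  shows "cmod (eigval b l) = 1"
proof -
  have "cmod (eigval b l) ^ 2 = 1"
    using eigval_square[OF assms] norm_gen_phase[OF assms(2)] by (metis norm_power power_one)
  then show ?thesis using norm_ge_zero[of "eigval b l"] by (simp add: power2_eq_1_iff)
qed

definition stab_op :: "nat set \<Rightarrow> nat \<Rightarrow> nat \<Rightarrow> complex" where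
  "stab_op T = mprod_list N (map P (sorted_list_of_set T))"

definition stab_eigval :: "nat \<Rightarrow> nat set \<Rightarrow> complex" where
  "stab_eigval b T = (\<Prod>l\<in>T. eigval b l)"

lemma mprod_list_eigen:
  assumes "set xs \<subseteq> {..<N}" "b < 2 ^ N"
  shows "mvmult N (mprod_list N (map P xs)) (Phi b) = (\<lambda>i. prod_list (map (eigval b) xs) * Phi b i)"
  using assms(1)
proof (induction xs)
  case Nil
  then show ?case using mvmult_ident basis_vec assms(2) by simp
next
  case (Cons x xs)
  then have "mvmult N (mprod_list N (map P (x # xs))) (Phi b)
      = mvmult N (P x) (\<lambda>i. prod_list (map (eigval b) xs) * Phi b i)"
    by (simp add: mvmult_mmult)
  also have "\<dots> = (\<lambda>i. prod_list (map (eigval b) xs) * (eigval b x * Phi b i))"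
    using Cons.prems by (simp add: mvmult_scale eigval_eigen[OF assms(2)])
  finally show ?case by (simp add: mult_ac)
qed

lemma stab_op_eigen:
  assumes "T \<subseteq> {..<N}" "b < 2 ^ N"
  shows "mvmult N (stab_op T) (Phi b) = (\<lambda>i. stab_eigval b T * Phi b i)"
proof -
  have "finite T" using assms(1) finite_subset by blast
  then have "stab_eigval b T = prod_list (map (eigval b) (sorted_list_of_set T))"
    unfolding stab_eigval_def
    using prod.distinct_set_conv_list[of "sorted_list_of_set T" "eigval b"] by simp
  then show ?thesis
    unfolding stab_op_def using mprod_list_eigen[of "sorted_list_of_set T" b] assms \<open>finite T\<close> by simp
qed

lemma mprod_list_pauli:
  assumes "set xs \<subseteq> {..<N}"
  shows "\<exists>c ps. mprod_list N (map P xs) = pauli_op N c ps \<and> cmod c = 1"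
  using assms
proof (induction xs)
  case Nil
  then show ?case using ident_eq_pauli_op by auto
next
  case (Cons x xs)
  then obtain c ps where cps: "mprod_list N (map P xs) = pauli_op N c ps" "cmod c = 1" by auto
  have x: "x < N" using Cons.prems by auto
  let ?c = "gen_phase x * c * (\<Prod>k<N. pauli1_phase (gen_string x k) (ps k))"
  have "mprod_list N (map P (x # xs)) = pauli_op N ?c (\<lambda>k. pauli1_mult (gen_string x k) (ps k))"
    using generator_eq_pauli_op(1)[OF x] cps by (simp add: mmult_pauli_op)
  moreover have "cmod ?c = 1"
    using cps norm_gen_phase[OF x] by (simp add: norm_mult prod_norm[symmetric])
  ultimately show ?case by blast
qed

definition stab_phase :: "nat set \<Rightarrow> complex" where
  "stab_phase T = (SOME c. \<exists>ps. stab_op T = pauli_op N c ps \<and> cmod c = 1)"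

definition stab_string :: "nat set \<Rightarrow> nat \<Rightarrow> pauli1" where
  "stab_string T = (SOME ps. stab_op T = pauli_op N (stab_phase T) ps)"

lemma stab_op_eq_pauli_op:
  assumes "T \<subseteq> {..<N}"
  shows "stab_op T = pauli_op N (stab_phase T) (stab_string T)" and "cmod (stab_phase T) = 1"
proof -
  have "finite T" using assms finite_subset by blast
  then have "\<exists>c ps. stab_op T = pauli_op N c ps \<and> cmod c = 1"
    unfolding stab_op_def using mprod_list_pauli assms by simp
  then have "\<exists>ps. stab_op T = pauli_op N (stab_phase T) ps \<and> cmod (stab_phase T) = 1"
    unfolding stab_phase_def by (rule someI_ex)
  then obtain ps where eq: "stab_op T = pauli_op N (stab_phase T) ps"
    and norm: "cmod (stab_phase T) = 1"
    by blast
  from eq show "stab_op T = pauli_op N (stab_phase T) (stab_string T)"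
    unfolding stab_string_def by (rule someI[of "\<lambda>ps. stab_op T = pauli_op N (stab_phase T) ps"])
  from norm show "cmod (stab_phase T) = 1" .
qed

lemma stab_op_outside:
  assumes "T \<subseteq> {..<N}" "\<not> (i < 2 ^ N \<and> j < 2 ^ N)"
  shows "stab_op T i j = 0"
  using assms unfolding stab_op_eq_pauli_op(1)[OF assms(1)] pauli_op_def by auto

lemma stab_op_empty: "stab_op {} = ident N"
  unfolding stab_op_def by simp

lemma stab_string_empty:
  assumes "k < N"
  shows "stab_string {} k = PI"
proof -
  have "pauli_op N 1 (\<lambda>_. PI) = pauli_op N (stab_phase {}) (stab_string {})"
    using stab_op_eq_pauli_op(1)[of "{}"] stab_op_empty ident_eq_pauli_op by simp
  then show ?thesis using pauli_op_eqD(1) assms by fastforce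
qed

lemma spectral_entry:
  assumes "\<forall>b<2 ^ N. mvmult N A (Phi b) = (\<lambda>i. \<alpha> b * Phi b i)" "i < 2 ^ N" "j < 2 ^ N"
  shows "A i j = (\<Sum>b<2 ^ N. \<alpha> b * Phi b i * cnj (Phi b j))"
proof -
  have "(\<Sum>b<2 ^ N. \<alpha> b * Phi b i * cnj (Phi b j)) = (\<Sum>b<2 ^ N. mvmult N A (Phi b) i * cnj (Phi b j))"
    using assms(1) by simp
  also have "\<dots> = (\<Sum>b<2 ^ N. \<Sum>l<2 ^ N. A i l * (Phi b l * cnj (Phi b j)))"
    unfolding mvmult_def by (simp add: sum_distrib_right mult.assoc)
  also have "\<dots> = (\<Sum>l<2 ^ N. A i l * (\<Sum>b<2 ^ N. Phi b l * cnj (Phi b j)))"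
    by (subst sum.swap) (simp add: sum_distrib_left)
  also have "\<dots> = A i j"
    using assms(3) by (simp add: basis_complete if_distrib[where f = "(*) _"] cong: if_cong)
  finally show ?thesis by simp
qed

lemma stab_op_spectral:
  assumes "T \<subseteq> {..<N}" "i < 2 ^ N" "j < 2 ^ N"
  shows "stab_op T i j = (\<Sum>b<2 ^ N. stab_eigval b T * Phi b i * cnj (Phi b j))"
  using spectral_entry[of "stab_op T" "\<lambda>b. stab_eigval b T"] stab_op_eigen assms by simp

lemma trace_stab_op:
  assumes "T \<subseteq> {..<N}"
  shows "(\<Sum>i<2 ^ N. stab_op T i i) = (\<Sum>b<2 ^ N. stab_eigval b T)"
proof -
  have "(\<Sum>i<2 ^ N. stab_op T i i)
      = (\<Sum>i<2 ^ N. \<Sum>b<2 ^ N. stab_eigval b T * (Phi b i * cnj (Phi b i)))"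
    using stab_op_spectral[OF assms] by (simp add: mult.assoc)
  also have "\<dots> = (\<Sum>b<2 ^ N. stab_eigval b T * (\<Sum>i<2 ^ N. Phi b i * cnj (Phi b i)))"
    by (subst sum.swap) (simp add: sum_distrib_left)
  finally show ?thesis by (simp add: basis_norm)
qed

text \<open>Independence of the generators is used only here.\<close>
lemma trace_stab_op_nonempty:
  assumes "T \<subseteq> {..<N}" "T \<noteq> {}"
  shows "(\<Sum>i<2 ^ N. stab_op T i i) = 0"
proof (cases "\<forall>k<N. stab_string T k = PI")
  case True
  then have "stab_op T = pauli_op N (stab_phase T) (\<lambda>_. PI)"
    using stab_op_eq_pauli_op(1)[OF assms(1)] pauli_op_cong[of N "stab_string T" "\<lambda>_. PI"] by simp
  then have "mprod_list N (map P (sorted_list_of_set T)) = (\<lambda>i j. stab_phase T * ident N i j)"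
    unfolding stab_op_def ident_eq_pauli_op scale_pauli_op by simp
  then show ?thesis
    using generators_independent assms unfolding independent_paulis_def by blast
next
  case False
  then obtain k where "k < N" "stab_string T k \<noteq> PI" by auto
  then have "(\<Prod>k<N. if stab_string T k = PI then 2 else 0) = (0::complex)"
    by (intro prod_zero) auto
  then show ?thesis
    using stab_op_eq_pauli_op(1)[OF assms(1)] trace_pauli_op[of N "stab_phase T" "stab_string T"] by simp
qed

lemma stab_string_trivial_imp_empty:
  assumes "T \<subseteq> {..<N}" "\<forall>k<N. stab_string T k = PI"
  shows "T = {}"
proof (rule ccontr)
  assume "T \<noteq> {}"
  have "(\<Sum>i<2 ^ N. stab_op T i i) = stab_phase T * 2 ^ N"
    using stab_op_eq_pauli_op(1)[OF assms(1)] trace_pauli_op[of N "stab_phase T"] assms(2) by simp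
  then show False
    using trace_stab_op_nonempty[OF assms(1) \<open>T \<noteq> {}\<close>] stab_op_eq_pauli_op(2)[OF assms(1)] by auto
qed

lemma eigval_pair:
  assumes "b < 2 ^ N" "b' < 2 ^ N" "l < N"
  shows "1 + cnj (eigval b' l) * eigval b l = (if eigval b l = eigval b' l then 2 else 0)"
proof -
  let ?x = "eigval b l" and ?y = "eigval b' l"
  have "cnj ?y * ?y = 1"
    using norm_eigval[OF assms(2,3)] complex_norm_square[of ?y] by (simp add: mult.commute)
  moreover have "?x\<^sup>2 = ?y\<^sup>2"
    using eigval_square[OF assms(1,3)] eigval_square[OF assms(2,3)] by simp
  then have "?x = ?y \<or> ?x = - ?y" by (rule power2_eq_iff[THEN iffD1])
  ultimately show ?thesis by auto
qed

lemma sum_stab_eigval_products: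
  assumes "b < 2 ^ N" "b' < 2 ^ N"
  shows "(\<Sum>T\<in>Pow {..<N}. cnj (stab_eigval b' T) * stab_eigval b T)
       = (if \<forall>l<N. eigval b l = eigval b' l then 2 ^ N else 0)"
proof -
  have "(\<Sum>T\<in>Pow {..<N}. cnj (stab_eigval b' T) * stab_eigval b T)
      = (\<Sum>T\<in>Pow {..<N}. \<Prod>l\<in>T. cnj (eigval b' l) * eigval b l)"
    unfolding stab_eigval_def by (simp add: prod.distrib)
  also have "\<dots> = (\<Prod>l<N. 1 + cnj (eigval b' l) * eigval b l)"
    using prod_add[of "{..<N}" "\<lambda>l. cnj (eigval b' l) * eigval b l" "\<lambda>_. 1"] by (simp add: add.commute)
  also have "\<dots> = (\<Prod>l<N. if eigval b l = eigval b' l then 2 else 0)"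
    using eigval_pair[OF assms] by (intro prod.cong) auto
  also have "\<dots> = (if \<forall>l<N. eigval b l = eigval b' l then 2 ^ N else 0)"
    by auto
  finally show ?thesis .
qed

lemma sum_stab_eigval_traces:
  "(\<Sum>T\<in>Pow {..<N}. cnj (stab_eigval b T) * (\<Sum>i<2 ^ N. stab_op T i i)) = 2 ^ N"
proof -
  have "(\<Sum>T\<in>Pow {..<N} - {{}}. cnj (stab_eigval b T) * (\<Sum>i<2 ^ N. stab_op T i i)) = 0"
    by (intro sum.neutral) (auto simp: trace_stab_op_nonempty)
  then show ?thesis
    by (simp add: sum.remove[of "Pow {..<N}" "{}"] stab_op_empty stab_eigval_def ident_def)
qed

text \<open>Expanding the weighted trace sum in two ways counts the basis vectors sharing the
  eigenvalue pattern of \<open>b'\<close>: there is exactly one.\<close>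
lemma eigval_pattern_inj:
  assumes "b < 2 ^ N" "b' < 2 ^ N" "\<forall>l<N. eigval b l = eigval b' l"
  shows "b = b'"
proof -
  let ?B = "{b''. b'' < 2 ^ N \<and> (\<forall>l<N. eigval b'' l = eigval b' l)}"
  have "(2 :: complex) ^ N
      = (\<Sum>T\<in>Pow {..<N}. \<Sum>b''<2 ^ N. cnj (stab_eigval b' T) * stab_eigval b'' T)"
    using sum_stab_eigval_traces[of b'] by (simp add: trace_stab_op sum_distrib_left)
  also have "\<dots> = (\<Sum>b''<2 ^ N. if \<forall>l<N. eigval b'' l = eigval b' l then 2 ^ N else 0)"
    using sum_stab_eigval_products assms(2) by (subst sum.swap) (intro sum.cong refl, auto)
  also have "\<dots> = 2 ^ N * of_nat (card ?B)"
    by (simp add: sum.If_cases Int_def conj_commute)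
  finally have "card ?B = 1" by simp
  then obtain x where B: "?B = {x}" by (rule card_1_singletonE)
  have "b \<in> ?B" "b' \<in> ?B" using assms by auto
  then have "b \<in> {x}" "b' \<in> {x}" by (simp_all only: B)
  then show ?thesis by simp
qed

lemma stab_eigval_orthogonal:
  assumes "b < 2 ^ N" "b' < 2 ^ N"
  shows "(\<Sum>T\<in>Pow {..<N}. cnj (stab_eigval b' T) * stab_eigval b T) = (if b = b' then 2 ^ N else 0)"
proof -
  have "(\<forall>l<N. eigval b l = eigval b' l) \<longleftrightarrow> b = b'" using eigval_pattern_inj[OF assms] by blast
  then show ?thesis using sum_stab_eigval_products[OF assms] by simp
qed

lemma basis_projector_expansion:
  assumes "b < 2 ^ N" "i < 2 ^ N" "j < 2 ^ N"
  shows "Phi b i * cnj (Phi b j) = (\<Sum>T\<in>Pow {..<N}. cnj (stab_eigval b T) * stab_op T i j) / 2 ^ N"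
proof -
  have "(\<Sum>T\<in>Pow {..<N}. cnj (stab_eigval b T) * stab_op T i j)
      = (\<Sum>T\<in>Pow {..<N}. \<Sum>b'<2 ^ N. cnj (stab_eigval b T) * stab_eigval b' T * (Phi b' i * cnj (Phi b' j)))"
    using stab_op_spectral assms(2,3) by (intro sum.cong refl) (auto simp: sum_distrib_left mult.assoc)
  also have "\<dots> = (\<Sum>b'<2 ^ N. (\<Sum>T\<in>Pow {..<N}. cnj (stab_eigval b T) * stab_eigval b' T) * (Phi b' i * cnj (Phi b' j)))"
    by (subst sum.swap) (simp add: sum_distrib_right)
  also have "\<dots> = 2 ^ N * (Phi b i * cnj (Phi b j))"
    using assms(1) by (simp add: stab_eigval_orthogonal if_distrib[where f = "\<lambda>x. x * _"] cong: if_cong)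
  finally show ?thesis by simp
qed

lemma spectral_mult:
  assumes "i < 2 ^ N" "j < 2 ^ N"
  shows "(\<Sum>l<2 ^ N. (\<Sum>b<2 ^ N. \<alpha> b * Phi b i * cnj (Phi b l)) * (\<Sum>b<2 ^ N. \<beta> b * Phi b l * cnj (Phi b j)))
       = (\<Sum>b<2 ^ N. \<alpha> b * \<beta> b * Phi b i * cnj (Phi b j))"
proof -
  let ?F = "\<lambda>b b'. \<alpha> b * Phi b i * (\<beta> b' * cnj (Phi b' j))"
  have "(\<Sum>l<2 ^ N. (\<Sum>b<2 ^ N. \<alpha> b * Phi b i * cnj (Phi b l)) * (\<Sum>b<2 ^ N. \<beta> b * Phi b l * cnj (Phi b j)))
      = (\<Sum>l<2 ^ N. \<Sum>b<2 ^ N. \<Sum>b'<2 ^ N. ?F b b' * (cnj (Phi b l) * Phi b' l))"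
    by (simp add: sum_product mult_ac)
  also have "\<dots> = (\<Sum>b<2 ^ N. \<Sum>l<2 ^ N. \<Sum>b'<2 ^ N. ?F b b' * (cnj (Phi b l) * Phi b' l))"
    by (rule sum.swap)
  also have "\<dots> = (\<Sum>b<2 ^ N. \<Sum>b'<2 ^ N. ?F b b' * (\<Sum>l<2 ^ N. cnj (Phi b l) * Phi b' l))"
    by (subst sum.swap) (simp add: sum_distrib_left)
  also have "\<dots> = (\<Sum>b<2 ^ N. ?F b b)"
    by (simp add: basis_inner if_distrib[where f = "(*) _"] cong: if_cong)
  finally show ?thesis by (simp add: mult_ac)
qed

definition stab_cocycle :: "nat set \<Rightarrow> nat set \<Rightarrow> complex" where
  "stab_cocycle T T' = (\<Prod>l\<in>T \<inter> T'. (gen_phase l)\<^sup>2)"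

lemma norm_stab_cocycle: "T \<subseteq> {..<N} \<Longrightarrow> cmod (stab_cocycle T T') = 1"
  unfolding stab_cocycle_def prod_norm[symmetric]
  using norm_gen_phase by (intro prod.neutral) (auto simp: norm_power)

lemma stab_eigval_mult:
  assumes "b < 2 ^ N" "T \<subseteq> {..<N}" "T' \<subseteq> {..<N}"
  shows "stab_eigval b T * stab_eigval b T' = stab_cocycle T T' * stab_eigval b (symdiff T T')"
proof -
  have fin: "finite T" "finite T'" using assms finite_subset by blast+
  let ?p = "\<lambda>A. \<Prod>l\<in>A. eigval b l"
  have T: "stab_eigval b T = ?p (T - T') * ?p (T \<inter> T')"
    unfolding stab_eigval_def using fin by (subst prod.union_disjoint[symmetric]) (auto intro!: prod.cong)
  have T': "stab_eigval b T' = ?p (T' - T) * ?p (T \<inter> T')"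
    unfolding stab_eigval_def using fin by (subst prod.union_disjoint[symmetric]) (auto intro!: prod.cong)
  have T'': "stab_eigval b (symdiff T T') = ?p (T - T') * ?p (T' - T)"
    unfolding stab_eigval_def symdiff_def using fin by (subst prod.union_disjoint) auto
  have cocycle: "?p (T \<inter> T') * ?p (T \<inter> T') = stab_cocycle T T'"
    unfolding stab_cocycle_def prod.distrib[symmetric] using eigval_square assms
    by (intro prod.cong refl) (auto simp: power2_eq_square)
  show ?thesis unfolding T T' T'' cocycle[symmetric] by (simp add: mult_ac)
qed

lemma stab_op_mult:
  assumes "T \<subseteq> {..<N}" "T' \<subseteq> {..<N}"
  shows "mmult N (stab_op T) (stab_op T') = (\<lambda>i j. stab_cocycle T T' * stab_op (symdiff T T') i j)"
proof (intro ext)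
  fix i j
  show "mmult N (stab_op T) (stab_op T') i j = stab_cocycle T T' * stab_op (symdiff T T') i j"
  proof (cases "i < 2 ^ N \<and> j < 2 ^ N")
    case True
    have "mmult N (stab_op T) (stab_op T') i j
        = (\<Sum>l<2 ^ N. (\<Sum>b<2 ^ N. stab_eigval b T * Phi b i * cnj (Phi b l))
                      * (\<Sum>b<2 ^ N. stab_eigval b T' * Phi b l * cnj (Phi b j)))"
      unfolding mmult_def using True stab_op_spectral assms by (intro sum.cong refl) auto
    also have "\<dots> = (\<Sum>b<2 ^ N. stab_eigval b T * stab_eigval b T' * Phi b i * cnj (Phi b j))"
      using True by (intro spectral_mult) auto
    also have "\<dots> = stab_cocycle T T' * (\<Sum>b<2 ^ N. stab_eigval b (symdiff T T') * Phi b i * cnj (Phi b j))"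
      using stab_eigval_mult assms by (simp add: sum_distrib_left mult_ac)
    finally show ?thesis
      using stab_op_spectral[OF symdiff_subset[OF assms]] True by simp
  next
    case False
    have "mmult N (stab_op T) (stab_op T') i j = 0"
      unfolding mmult_def using False stab_op_outside assms by (intro sum.neutral) auto
    then show ?thesis using stab_op_outside[OF symdiff_subset[OF assms] False] by simp
  qed
qed

lemma stab_string_symdiff:
  assumes "T \<subseteq> {..<N}" "T' \<subseteq> {..<N}"
  shows "\<forall>k<N. stab_string (symdiff T T') k = pauli1_mult (stab_string T k) (stab_string T' k)"
    and "stab_cocycle T T' * stab_phase (symdiff T T')
           = stab_phase T * stab_phase T' * (\<Prod>k<N. pauli1_phase (stab_string T k) (stab_string T' k))"
proof -
  let ?T'' = "symdiff T T'"
  have "pauli_op N (stab_cocycle T T' * stab_phase ?T'') (stab_string ?T'')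
      = (\<lambda>i j. stab_cocycle T T' * stab_op ?T'' i j)"
    using stab_op_eq_pauli_op(1)[OF symdiff_subset[OF assms]] scale_pauli_op by metis
  also have "\<dots> = mmult N (stab_op T) (stab_op T')" using stab_op_mult[OF assms] by simp
  also have "\<dots> = pauli_op N (stab_phase T * stab_phase T' * (\<Prod>k<N. pauli1_phase (stab_string T k) (stab_string T' k)))
                      (\<lambda>k. pauli1_mult (stab_string T k) (stab_string T' k))"
    using stab_op_eq_pauli_op(1)[OF assms(1)] stab_op_eq_pauli_op(1)[OF assms(2)] mmult_pauli_op by metis
  finally have eq: "pauli_op N (stab_cocycle T T' * stab_phase ?T'') (stab_string ?T'') = \<dots>" .
  have "stab_cocycle T T' * stab_phase ?T'' \<noteq> 0"
    using norm_stab_cocycle[OF assms(1), of T'] stab_op_eq_pauli_op(2)[OF symdiff_subset[OF assms]]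
    by (auto simp: norm_mult)
  then show "\<forall>k<N. stab_string ?T'' k = pauli1_mult (stab_string T k) (stab_string T' k)"
    and "stab_cocycle T T' * stab_phase ?T''
           = stab_phase T * stab_phase T' * (\<Prod>k<N. pauli1_phase (stab_string T k) (stab_string T' k))"
    using pauli_op_eqD[OF eq] by simp_all
qed

end

section \<open>Bipartition into data and ancilla qubits\<close>

locale bipartite_stabilizer_frame = stabilizer_frame "n + m" Phi P
  for n m :: nat and Phi :: "nat \<Rightarrow> nat \<Rightarrow> complex" and P :: "nat \<Rightarrow> nat \<Rightarrow> nat \<Rightarrow> complex"
begin

definition data_stabilizers :: "nat set set" where
  "data_stabilizers = {T \<in> Pow {..<n + m}. \<forall>k<m. stab_string T k = PI}"

text \<open>Padding with \<open>PI\<close> beyond \<open>n\<close> makes the string a function of the operator it denotes.\<close>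
definition data_string :: "nat set \<Rightarrow> nat \<Rightarrow> pauli1" where
  "data_string T = (\<lambda>k. if k < n then stab_string T (k + m) else PI)"

definition data_op :: "nat set \<Rightarrow> nat \<Rightarrow> nat \<Rightarrow> complex" where
  "data_op T a a' = stab_phase T * pauli_op n 1 (data_string T) a a'"

lemma data_stabilizers_subset: "T \<in> data_stabilizers \<Longrightarrow> T \<subseteq> {..<n + m}"
  unfolding data_stabilizers_def by blast

lemma finite_data_stabilizers: "finite data_stabilizers"
  unfolding data_stabilizers_def by simp

lemma empty_in_data_stabilizers: "{} \<in> data_stabilizers"
  unfolding data_stabilizers_def using stab_string_empty by auto

lemma stab_op_tensor_entry:
  assumes "T \<subseteq> {..<n + m}" "a < 2 ^ n" "a' < 2 ^ n" "c < 2 ^ m" "c' < 2 ^ m"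
  shows "stab_op T (a * 2 ^ m + c) (a' * 2 ^ m + c')
       = pauli_op m 1 (stab_string T) c c' * data_op T a a'"
proof -
  have "pauli_op n 1 (\<lambda>k. stab_string T (k + m)) = pauli_op n 1 (data_string T)"
    unfolding data_string_def by (rule pauli_op_cong) simp
  then show ?thesis
    using stab_op_eq_pauli_op(1)[OF assms(1)] pauli_op_tensor_entry[OF assms(2-5)]
    by (simp add: data_op_def)
qed

lemma partial_trace_stab_op:
  assumes "T \<subseteq> {..<n + m}" "a < 2 ^ n" "a' < 2 ^ n"
  shows "(\<Sum>c<2 ^ m. stab_op T (a * 2 ^ m + c) (a' * 2 ^ m + c))
       = (if T \<in> data_stabilizers then 2 ^ m * data_op T a a' else 0)"
proof -
  have "(\<Sum>c<2 ^ m. stab_op T (a * 2 ^ m + c) (a' * 2 ^ m + c))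
      = (\<Prod>k<m. if stab_string T k = PI then 2 else 0) * data_op T a a'"
    using trace_pauli_op[of m 1 "stab_string T"]
    by (simp add: stab_op_tensor_entry[OF assms] flip: sum_distrib_right)
  also have "(\<Prod>k<m. if stab_string T k = PI then 2 else (0::complex))
      = (if T \<in> data_stabilizers then 2 ^ m else 0)"
    using assms(1) by (auto simp: data_stabilizers_def)
  finally show ?thesis by simp
qed

definition reduced_op :: "nat \<Rightarrow> nat \<Rightarrow> nat \<Rightarrow> complex" where
  "reduced_op b a a' = (\<Sum>T\<in>data_stabilizers. cnj (stab_eigval b T) * data_op T a a') / 2 ^ n"

lemma reduced_state_entry:
  assumes "b < 2 ^ (n + m)" "a < 2 ^ n" "a' < 2 ^ n"
  shows "(\<Sum>c<2 ^ m. Phi b (a * 2 ^ m + c) * cnj (Phi b (a' * 2 ^ m + c))) = reduced_op b a a'"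
proof -
  let ?g = "\<lambda>T. \<Sum>c<2 ^ m. stab_op T (a * 2 ^ m + c) (a' * 2 ^ m + c)"
  have "(\<Sum>c<2 ^ m. Phi b (a * 2 ^ m + c) * cnj (Phi b (a' * 2 ^ m + c)))
     = (\<Sum>c<2 ^ m. (\<Sum>T\<in>Pow {..<n + m}. cnj (stab_eigval b T) * stab_op T (a * 2 ^ m + c) (a' * 2 ^ m + c))
                  / 2 ^ (n + m))"
    using assms by (intro sum.cong refl basis_projector_expansion) (auto intro: tensor_index_less)
  also have "\<dots> = (\<Sum>T\<in>Pow {..<n + m}. cnj (stab_eigval b T) * ?g T) / 2 ^ (n + m)"
    by (simp add: sum_divide_distrib[symmetric] sum_distrib_left sum.swap[of _ "{..<2 ^ m}"])
  also have "\<dots> = (\<Sum>T\<in>Pow {..<n + m}.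
      if T \<in> data_stabilizers then cnj (stab_eigval b T) * (2 ^ m * data_op T a a') else 0) / 2 ^ (n + m)"
    using partial_trace_stab_op assms(2,3) by (intro arg_cong2[where f = "(/)"] sum.cong refl) auto
  also have "\<dots> = (\<Sum>T\<in>data_stabilizers. cnj (stab_eigval b T) * (2 ^ m * data_op T a a')) / 2 ^ (n + m)"
    unfolding data_stabilizers_def by (subst sum.inter_filter) auto
  finally show ?thesis
    unfolding reduced_op_def by (simp add: sum_distrib_left[symmetric] power_add field_simps)
qed

lemma data_string_symdiff:
  assumes "T \<subseteq> {..<n + m}" "T' \<subseteq> {..<n + m}"
  shows "data_string (symdiff T T') = (\<lambda>k. pauli1_mult (data_string T k) (data_string T' k))"
  using stab_string_symdiff(1)[OF assms] unfolding data_string_def by auto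

lemma symdiff_in_data_stabilizers:
  assumes "T \<in> data_stabilizers" "T' \<in> data_stabilizers"
  shows "symdiff T T' \<in> data_stabilizers"
  using assms stab_string_symdiff(1)[OF data_stabilizers_subset data_stabilizers_subset]
    symdiff_subset[OF data_stabilizers_subset data_stabilizers_subset]
  unfolding data_stabilizers_def by auto

lemma data_op_mult:
  assumes "T \<in> data_stabilizers" "T' \<in> data_stabilizers" "a < 2 ^ n" "a'' < 2 ^ n"
  shows "(\<Sum>a'<2 ^ n. data_op T a a' * data_op T' a' a'') = stab_cocycle T T' * data_op (symdiff T T') a a''"
proof -
  have s: "T \<subseteq> {..<n + m}" "T' \<subseteq> {..<n + m}" using assms data_stabilizers_subset by auto
  let ?ph = "\<lambda>k. pauli1_phase (data_string T k) (data_string T' k)"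
  have "(\<Prod>k<n + m. pauli1_phase (stab_string T k) (stab_string T' k)) = (\<Prod>k<n. ?ph k)"
    using assms prod_lessThan_add[of "\<lambda>k. pauli1_phase (stab_string T k) (stab_string T' k)" m n]
    by (simp add: add.commute data_stabilizers_def data_string_def)
  then have phase: "stab_phase T * stab_phase T' * (\<Prod>k<n. ?ph k) = stab_cocycle T T' * stab_phase (symdiff T T')"
    using stab_string_symdiff(2)[OF s] by simp
  have "(\<Sum>a'<2 ^ n. data_op T a a' * data_op T' a' a'')
      = stab_phase T * stab_phase T' * mmult n (pauli_op n 1 (data_string T)) (pauli_op n 1 (data_string T')) a a''"
    unfolding data_op_def mmult_def by (simp add: sum_distrib_left mult_ac)
  also have "\<dots> = stab_phase T * stab_phase T' * (\<Prod>k<n. ?ph k) * pauli_op n 1 (data_string (symdiff T T')) a a''"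
    using pauli_op_scale_entry[of n "\<Prod>k<n. ?ph k"] by (simp add: mmult_pauli_op data_string_symdiff[OF s])
  finally show ?thesis unfolding phase data_op_def by (simp add: mult_ac)
qed

lemma cnj_stab_eigval_mult:
  assumes "b < 2 ^ (n + m)" "T \<subseteq> {..<n + m}" "T' \<subseteq> {..<n + m}"
  shows "cnj (stab_eigval b T) * cnj (stab_eigval b T') * stab_cocycle T T' = cnj (stab_eigval b (symdiff T T'))"
proof -
  have "cnj (stab_cocycle T T') * stab_cocycle T T' = 1"
    using norm_stab_cocycle[OF assms(2), of T'] complex_norm_square[of "stab_cocycle T T'"]
    by (simp add: mult.commute)
  then show ?thesis
    using arg_cong[OF stab_eigval_mult[OF assms], of cnj] by (simp add: mult_ac)
qed

lemma reduced_op_square: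
  assumes "b < 2 ^ (n + m)" "a < 2 ^ n" "a'' < 2 ^ n"
  shows "(\<Sum>a'<2 ^ n. reduced_op b a a' * reduced_op b a' a'')
       = of_nat (card data_stabilizers) / 2 ^ n * reduced_op b a a''"
proof -
  let ?S = "data_stabilizers" and ?c = "\<lambda>T. cnj (stab_eigval b T)"
  have "(\<Sum>a'<2 ^ n. reduced_op b a a' * reduced_op b a' a'')
      = (\<Sum>T\<in>?S. \<Sum>T'\<in>?S. ?c T * ?c T' * (\<Sum>a'<2 ^ n. data_op T a a' * data_op T' a' a'')) / 2 ^ n / 2 ^ n"
    unfolding reduced_op_def
    by (simp add: sum_product sum_divide_distrib sum_distrib_left sum.swap[of _ "{..<2 ^ n}"] mult_ac)
  also have "\<dots> = (\<Sum>T\<in>?S. \<Sum>T'\<in>?S. ?c (symdiff T T') * data_op (symdiff T T') a a'') / 2 ^ n / 2 ^ n"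
  proof -
    have "?c T * ?c T' * (\<Sum>a'<2 ^ n. data_op T a a' * data_op T' a' a'')
        = ?c (symdiff T T') * data_op (symdiff T T') a a''" if "T \<in> ?S" "T' \<in> ?S" for T T'
      using data_op_mult[OF that assms(2,3)]
        cnj_stab_eigval_mult[OF assms(1) data_stabilizers_subset[OF that(1)] data_stabilizers_subset[OF that(2)]]
      by (simp add: mult.assoc[symmetric])
    then show ?thesis by (simp cong: sum.cong)
  qed
  also have "\<dots> = (\<Sum>T\<in>?S. \<Sum>T''\<in>?S. ?c T'' * data_op T'' a a'') / 2 ^ n / 2 ^ n"
  proof -
    have "(\<Sum>T'\<in>?S. ?c (symdiff T T') * data_op (symdiff T T') a a'') = (\<Sum>T''\<in>?S. ?c T'' * data_op T'' a a'')"
      if "T \<in> ?S" for T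
      by (rule sum.reindex_bij_witness[of _ "symdiff T" "symdiff T"])
         (auto simp: symdiff_symdiff_cancel symdiff_in_data_stabilizers that)
    then show ?thesis by (simp cong: sum.cong)
  qed
  finally show ?thesis unfolding reduced_op_def by (simp add: field_simps)
qed

lemma reduced_state_eq:
  "b < 2 ^ (n + m) \<Longrightarrow> reduced_state n m (Phi b) = mat (2 ^ n) (2 ^ n) (\<lambda>(a, a'). reduced_op b a a')"
  unfolding reduced_state_def using reduced_state_entry by (intro eq_matI) auto

lemma trace_reduced_state:
  assumes "b < 2 ^ (n + m)"
  shows "(\<Sum>a<2 ^ n. reduced_state n m (Phi b) $$ (a, a)) = 1"
proof -
  have "(\<Sum>a<2 ^ n. reduced_state n m (Phi b) $$ (a, a))
      = (\<Sum>a<2 ^ n. \<Sum>c<2 ^ m. Phi b (a * 2 ^ m + c) * cnj (Phi b (a * 2 ^ m + c)))"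
    unfolding reduced_state_def by simp
  also have "\<dots> = (\<Sum>i<2 ^ n * 2 ^ m. Phi b i * cnj (Phi b i))"
    by (rule sum_tensor_index)
  also have "\<dots> = 1"
    using basis_norm[OF assms] by (simp add: power_add)
  finally show ?thesis .
qed

lemma reduced_state_square:
  assumes "b < 2 ^ (n + m)"
  shows "reduced_state n m (Phi b) * reduced_state n m (Phi b)
     = complex_of_real (card data_stabilizers / 2 ^ n) \<cdot>\<^sub>m reduced_state n m (Phi b)"
  unfolding reduced_state_eq[OF assms]
  by (rule eq_matI) (auto simp: scalar_prod_def atLeast0LessThan reduced_op_square[OF assms])

lemma card_data_stabilizers_pos: "card data_stabilizers > 0"
  using empty_in_data_stabilizers finite_data_stabilizers card_gt_0_iff by blast

lemma entanglement_entropy_eq: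
  assumes "b < 2 ^ (n + m)"
  shows "entanglement_entropy n m (Phi b) = - log 2 (card data_stabilizers / 2 ^ n)"
  unfolding entanglement_entropy_def
  by (rule vn_entropy_scaled_idempotent[OF _ reduced_state_square[OF assms] trace_reduced_state[OF assms]])
     (auto simp: reduced_state_def card_data_stabilizers_pos)

lemma card_data_stabilizers:
  assumes "entanglement_entropy n m (Phi 0) = real p"
  shows "card data_stabilizers = 2 ^ (n - p)"
proof -
  define x where "x = real (card data_stabilizers) / 2 ^ n"
  have "x > 0" unfolding x_def using card_data_stabilizers_pos by simp
  have "log 2 x = - real p" using assms entanglement_entropy_eq[of 0] unfolding x_def by simp
  moreover have "x = 2 powr (log 2 x)" using \<open>x > 0\<close> by simp
  ultimately have "x * 2 ^ p = 1" by (simp add: powr_minus powr_realpow divide_simps)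
  then have "real (card data_stabilizers * 2 ^ p) = real ((2::nat) ^ n)"
    unfolding x_def by (simp add: field_simps)
  then have e: "card data_stabilizers * 2 ^ p = 2 ^ n" by (simp only: of_nat_eq_iff)
  have "p \<le> n"
  proof (rule ccontr)
    assume "\<not> p \<le> n"
    then have "(2::nat) ^ n < 2 ^ p" by simp
    also have "\<dots> \<le> card data_stabilizers * 2 ^ p" using card_data_stabilizers_pos by simp
    finally show False using e by simp
  qed
  then have "(2::nat) ^ n = 2 ^ (n - p) * 2 ^ p" by (simp flip: power_add)
  then show ?thesis using e by simp
qed

text \<open>The operator \<open>(I \<otimes> \<langle>psi|) X (I \<otimes> |psi\<rangle>)\<close> on the data qubits.\<close>
definition ancilla_sandwich :: "(nat \<Rightarrow> complex) \<Rightarrow> (nat \<Rightarrow> nat \<Rightarrow> complex) \<Rightarrow> nat \<Rightarrow> nat \<Rightarrow> complex" where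
  "ancilla_sandwich psi X = (\<lambda>a a'. if a < 2 ^ n \<and> a' < 2 ^ n then
      (\<Sum>c<2 ^ m. \<Sum>c'<2 ^ m. cnj (psi c) * X (a * 2 ^ m + c) (a' * 2 ^ m + c') * psi c') else 0)"

lemma ancilla_sandwich_cong:
  assumes "\<And>i j. i < 2 ^ (n + m) \<Longrightarrow> j < 2 ^ (n + m) \<Longrightarrow> X i j = Y i j"
  shows "ancilla_sandwich psi X = ancilla_sandwich psi Y"
  unfolding ancilla_sandwich_def using assms tensor_index_less by (intro ext) (auto intro!: sum.cong)

lemma ancilla_sandwich_sum:
  "ancilla_sandwich psi (\<lambda>i j. \<Sum>x\<in>S. u x * X x i j) = (\<Sum>x\<in>S. cscale (u x) (ancilla_sandwich psi (X x)))"
proof (intro ext)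
  fix a a'
  show "ancilla_sandwich psi (\<lambda>i j. \<Sum>x\<in>S. u x * X x i j) a a'
      = (\<Sum>x\<in>S. cscale (u x) (ancilla_sandwich psi (X x))) a a'"
  proof (cases "a < 2 ^ n \<and> a' < 2 ^ n")
    case True
    let ?t = "\<lambda>x c c'. u x * (cnj (psi c) * X x (a * 2 ^ m + c) (a' * 2 ^ m + c') * psi c')"
    have "ancilla_sandwich psi (\<lambda>i j. \<Sum>x\<in>S. u x * X x i j) a a' = (\<Sum>c<2 ^ m. \<Sum>c'<2 ^ m. \<Sum>x\<in>S. ?t x c c')"
      unfolding ancilla_sandwich_def using True by (simp add: sum_distrib_left sum_distrib_right mult_ac)
    also have "\<dots> = (\<Sum>c<2 ^ m. \<Sum>x\<in>S. \<Sum>c'<2 ^ m. ?t x c c')"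
      by (rule sum.cong[OF refl], rule sum.swap)
    also have "\<dots> = (\<Sum>x\<in>S. \<Sum>c<2 ^ m. \<Sum>c'<2 ^ m. ?t x c c')"
      by (rule sum.swap)
    finally show ?thesis
      unfolding sum_cscale_apply ancilla_sandwich_def using True by (simp add: sum_distrib_left)
  qed (auto simp: sum_cscale_apply ancilla_sandwich_def)
qed

lemma mu_op_eq_ancilla_sandwich:
  "mu_op n m psi (Phi b) = ancilla_sandwich psi (\<lambda>i j. Phi b i * cnj (Phi b j))"
proof (intro ext)
  fix a a'
  show "mu_op n m psi (Phi b) a a' = ancilla_sandwich psi (\<lambda>i j. Phi b i * cnj (Phi b j)) a a'"
  proof (cases "a < 2 ^ n \<and> a' < 2 ^ n")
    case True
    have "mu_op n m psi (Phi b) a a'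
        = (\<Sum>c<2 ^ m. cnj (psi c) * Phi b (a * 2 ^ m + c)) * (\<Sum>c'<2 ^ m. psi c' * cnj (Phi b (a' * 2 ^ m + c')))"
      unfolding mu_op_def outer_def partial_bra_def using True by simp
    also have "\<dots> = (\<Sum>c<2 ^ m. \<Sum>c'<2 ^ m.
        (cnj (psi c) * Phi b (a * 2 ^ m + c)) * (psi c' * cnj (Phi b (a' * 2 ^ m + c'))))"
      by (rule sum_product)
    finally show ?thesis
      unfolding ancilla_sandwich_def using True by (simp add: mult_ac)
  qed (auto simp: mu_op_def outer_def partial_bra_def ancilla_sandwich_def)
qed

definition ancilla_expectation :: "(nat \<Rightarrow> complex) \<Rightarrow> nat set \<Rightarrow> complex" where
  "ancilla_expectation psi T
     = (\<Sum>c<2 ^ m. \<Sum>c'<2 ^ m. cnj (psi c) * pauli_op m 1 (stab_string T) c c' * psi c')"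

lemma ancilla_sandwich_stab_op:
  assumes "T \<subseteq> {..<n + m}"
  shows "ancilla_sandwich psi (stab_op T)
       = cscale (stab_phase T * ancilla_expectation psi T) (pauli_op n 1 (data_string T))"
proof (intro ext)
  fix a a'
  show "ancilla_sandwich psi (stab_op T) a a'
      = cscale (stab_phase T * ancilla_expectation psi T) (pauli_op n 1 (data_string T)) a a'"
  proof (cases "a < 2 ^ n \<and> a' < 2 ^ n")
    case True
    have "ancilla_sandwich psi (stab_op T) a a'
        = (\<Sum>c<2 ^ m. \<Sum>c'<2 ^ m. data_op T a a' * (cnj (psi c) * pauli_op m 1 (stab_string T) c c' * psi c'))"
      unfolding ancilla_sandwich_def using True
      by (auto simp: stab_op_tensor_entry[OF assms] mult_ac intro!: sum.cong)
    then show ?thesis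
      unfolding cscale_def ancilla_expectation_def data_op_def by (simp add: sum_distrib_left mult_ac)
  qed (auto simp: ancilla_sandwich_def cscale_def pauli_op_def)
qed

lemma ancilla_sandwich_stab_op_expansion:
  assumes "T \<subseteq> {..<n + m}"
  shows "ancilla_sandwich psi (stab_op T) = (\<Sum>b<2 ^ (n + m). cscale (stab_eigval b T) (mu_op n m psi (Phi b)))"
proof -
  have "ancilla_sandwich psi (stab_op T)
      = ancilla_sandwich psi (\<lambda>i j. \<Sum>b<2 ^ (n + m). stab_eigval b T * (Phi b i * cnj (Phi b j)))"
    using stab_op_spectral[OF assms] by (intro ancilla_sandwich_cong) (simp add: mult.assoc)
  then show ?thesis by (simp add: ancilla_sandwich_sum mu_op_eq_ancilla_sandwich)
qed

lemma mu_op_expansion: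
  assumes "b < 2 ^ (n + m)"
  shows "mu_op n m psi (Phi b)
       = (\<Sum>T\<in>Pow {..<n + m}. cscale (cnj (stab_eigval b T) / 2 ^ (n + m)) (ancilla_sandwich psi (stab_op T)))"
proof -
  have "mu_op n m psi (Phi b)
      = ancilla_sandwich psi (\<lambda>i j. \<Sum>T\<in>Pow {..<n + m}. (cnj (stab_eigval b T) / 2 ^ (n + m)) * stab_op T i j)"
    unfolding mu_op_eq_ancilla_sandwich using basis_projector_expansion[OF assms]
    by (intro ancilla_sandwich_cong) (simp add: sum_divide_distrib)
  then show ?thesis by (simp only: ancilla_sandwich_sum)
qed

definition visible_stabilizers :: "(nat \<Rightarrow> complex) \<Rightarrow> nat set set" where
  "visible_stabilizers psi = {T \<in> Pow {..<n + m}. ancilla_expectation psi T \<noteq> 0}"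

lemma span_mu_ops:
  "cspace.span {mu_op n m psi (Phi b) | b. b < 2 ^ (n + m)}
     = cspace.span (pauli_op n 1 ` data_string ` visible_stabilizers psi)"
proof (rule cspace.span_eq[THEN iffD2], intro conjI subsetI)
  fix x assume "x \<in> {mu_op n m psi (Phi b) | b. b < 2 ^ (n + m)}"
  then obtain b where b: "b < 2 ^ (n + m)" "x = mu_op n m psi (Phi b)" by auto
  have "ancilla_sandwich psi (stab_op T) \<in> cspace.span (pauli_op n 1 ` data_string ` visible_stabilizers psi)"
    if "T \<subseteq> {..<n + m}" for T
  proof (cases "ancilla_expectation psi T = 0")
    case True
    then show ?thesis
      by (simp add: ancilla_sandwich_stab_op[OF that] cscale_def cspace.span_zero[unfolded zero_fun_def])
  next
    case False
    then have "pauli_op n 1 (data_string T) \<in> pauli_op n 1 ` data_string ` visible_stabilizers psi"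
      using that unfolding visible_stabilizers_def by auto
    then show ?thesis
      unfolding ancilla_sandwich_stab_op[OF that] by (intro cspace.span_scale cspace.span_base)
  qed
  then show "x \<in> cspace.span (pauli_op n 1 ` data_string ` visible_stabilizers psi)"
    unfolding b(2) mu_op_expansion[OF b(1)] by (intro cspace.span_sum cspace.span_scale) auto
next
  fix x assume "x \<in> pauli_op n 1 ` data_string ` visible_stabilizers psi"
  then obtain T where T: "T \<in> visible_stabilizers psi" "x = pauli_op n 1 (data_string T)" by auto
  then have "T \<subseteq> {..<n + m}" and "ancilla_expectation psi T \<noteq> 0"
    unfolding visible_stabilizers_def by auto
  moreover have "stab_phase T \<noteq> 0"
    using stab_op_eq_pauli_op(2)[OF \<open>T \<subseteq> _\<close>] by force
  ultimately have "stab_phase T * ancilla_expectation psi T \<noteq> 0" by simp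
  then have "x = cscale (1 / (stab_phase T * ancilla_expectation psi T)) (ancilla_sandwich psi (stab_op T))"
    unfolding T(2) ancilla_sandwich_stab_op[OF \<open>T \<subseteq> _\<close>] by (simp add: cscale_def fun_eq_iff)
  also have "\<dots> \<in> cspace.span {mu_op n m psi (Phi b) | b. b < 2 ^ (n + m)}"
    unfolding ancilla_sandwich_stab_op_expansion[OF \<open>T \<subseteq> _\<close>]
    by (intro cspace.span_scale cspace.span_sum cspace.span_base) auto
  finally show "x \<in> cspace.span {mu_op n m psi (Phi b) | b. b < 2 ^ (n + m)}" .
qed

lemma data_string_padded: "data_string T \<in> {d. \<forall>k\<ge>n. d k = PI}"
  unfolding data_string_def by simp

lemma span_dim_mu_ops:
  "span_dim {mu_op n m psi (Phi b) | b. b < 2 ^ (n + m)} = card (data_string ` visible_stabilizers psi)"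
proof -
  let ?M = "{mu_op n m psi (Phi b) | b. b < 2 ^ (n + m)}"
    and ?F = "pauli_op n 1 ` data_string ` visible_stabilizers psi"
  have "span_dim ?M = cspace.dim (cspace.span ?M)"
    unfolding span_dim_def by simp
  also have "\<dots> = cspace.dim (cspace.span ?F)"
    unfolding span_mu_ops ..
  also have "\<dots> = card ?F"
    using independent_pauli_ops_padded[of "data_string ` visible_stabilizers psi" n] data_string_padded
    by (intro cspace.dim_span_eq_card_independent) blast
  also have "\<dots> = card (data_string ` visible_stabilizers psi)"
    using data_string_padded by (intro card_image inj_on_subset[OF inj_on_pauli_op_padded]) blast
  finally show ?thesis .
qed

lemma inj_on_data_string: "inj_on data_string data_stabilizers"
proof (rule inj_onI)
  fix T T' assume TT: "T \<in> data_stabilizers" "T' \<in> data_stabilizers" and eq: "data_string T = data_string T'"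
  have s: "T \<subseteq> {..<n + m}" "T' \<subseteq> {..<n + m}" using TT data_stabilizers_subset by auto
  have "stab_string (symdiff T T') k = PI" if "k < n + m" for k
  proof (cases "k < m")
    case True
    then show ?thesis using stab_string_symdiff(1)[OF s] that TT by (simp add: data_stabilizers_def)
  next
    case False
    then have "k - m + m = k" by simp
    then have "stab_string T k = stab_string T' k"
      using fun_cong[OF eq, of "k - m"] that by (simp add: data_string_def)
    then show ?thesis using stab_string_symdiff(1)[OF s] that by simp
  qed
  then have "symdiff T T' = {}"
    using stab_string_trivial_imp_empty symdiff_subset[OF s] by blast
  then show "T = T'" unfolding symdiff_def by auto
qed

lemma symdiff_in_visible_stabilizers:
  assumes "T \<in> visible_stabilizers psi" "T' \<in> data_stabilizers"
  shows "symdiff T T' \<in> visible_stabilizers psi"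
proof -
  have s: "T \<subseteq> {..<n + m}" "T' \<subseteq> {..<n + m}"
    using assms data_stabilizers_subset unfolding visible_stabilizers_def by auto
  have "pauli_op m 1 (stab_string (symdiff T T')) = pauli_op m 1 (stab_string T)"
    using stab_string_symdiff(1)[OF s] assms(2) unfolding data_stabilizers_def
    by (intro pauli_op_cong) auto
  then show ?thesis
    using assms(1) symdiff_subset[OF s] unfolding visible_stabilizers_def ancilla_expectation_def by simp
qed

lemma card_data_stabilizers_dvd:
  "card data_stabilizers dvd card (data_string ` visible_stabilizers psi)"
proof -
  let ?f = "\<lambda>x y (k::nat). pauli1_mult (x k) (y k)"
  have mult: "?f (data_string T) (data_string T') = data_string (symdiff T T')"
    if "T \<subseteq> {..<n + m}" "T' \<subseteq> {..<n + m}" for T T'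
    using data_string_symdiff[OF that] by simp
  have "card (data_string ` data_stabilizers) dvd card (data_string ` visible_stabilizers psi)"
  proof (rule card_dvd_card_if_boolean_group_closed[where f = ?f and e = "\<lambda>_. PI"])
    show "?f (?f x y) z = ?f x (?f y z)" for x y z
      by (simp add: pauli1_mult_assoc)
    show "?f x y = ?f y x" for x y
      by (simp add: pauli1_mult_commute)
    show "?f x x = (\<lambda>_. PI)" "?f x (\<lambda>_. PI) = x" for x
      by simp_all
    show "(\<lambda>_. PI) \<in> data_string ` data_stabilizers"
      using empty_in_data_stabilizers stab_string_empty
      by (intro image_eqI[of _ _ "{}"]) (auto simp: data_string_def)
    show "?f h h' \<in> data_string ` data_stabilizers"
      if "h \<in> data_string ` data_stabilizers" "h' \<in> data_string ` data_stabilizers" for h h'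
      using that mult data_stabilizers_subset symdiff_in_data_stabilizers by auto
    show "?f x h \<in> data_string ` visible_stabilizers psi"
      if "x \<in> data_string ` visible_stabilizers psi" "h \<in> data_string ` data_stabilizers" for x h
      using that mult data_stabilizers_subset symdiff_in_visible_stabilizers
      unfolding visible_stabilizers_def by auto
  qed (simp_all add: finite_data_stabilizers visible_stabilizers_def)
  then show ?thesis using card_image[OF inj_on_data_string] by simp
qed

end

theorem corollary1:
  fixes n m p :: nat and Phi :: "nat \<Rightarrow> nat \<Rightarrow> complex" and psi :: "nat \<Rightarrow> complex"
  assumes "stabilizer_basis (n + m) Phi"
    and "is_vec m psi" and "cinner m psi psi = 1"
    and "\<forall>b<2 ^ (n + m). entanglement_entropy n m (Phi b) = real p"
  shows "\<exists>k::nat. span_dim {mu_op n m psi (Phi b) | b. b < 2 ^ (n + m)} = k * 2 ^ (n - p)"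
proof -
  obtain P where "bipartite_stabilizer_frame n m Phi P"
    using assms(1) unfolding stabilizer_basis_def bipartite_stabilizer_frame_def stabilizer_frame_def
    by blast
  then interpret bipartite_stabilizer_frame n m Phi P .
  have "card data_stabilizers = 2 ^ (n - p)"
    using assms(4) by (intro card_data_stabilizers) simp
  then show ?thesis
    using card_data_stabilizers_dvd[of psi] span_dim_mu_ops[of psi] by (auto simp: mult.commute)
qed

end
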